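(* Let $W\in\mathbb{R}^{n\times n}$ be positive definite (i.e. $x^TWx>0$ for all nonzero $x$; $W$ need not be symmetric), with symmetric part $H=\frac12(W+W^T)$ and skew-symmetric part $S=\frac12(W-W^T)$. Let $B\in\mathbb{R}^{m\times n}$ with $\operatorname{rank}(B)<m\le n$, let $$A=\begin{pmatrix} W & B^T\\ -B & 0\end{pmatrix},$$ and let $b\in\mathbb{R}^{n+m}$ lie in the range of $A$. For $\omega>0$ let $P=\omega H$ and $$M=\begin{pmatrix} P & B^T\\ -B & 0\end{pmatrix}.$$ If $$\omega>\tfrac12\left(1+\rho\big(H^{-1/2}SH^{-1/2}\big)^2\right),$$ then the iteration $x^{(k+1)}=x^{(k)}+M^\dagger(b-Ax^{(k)})$, $k=0,1,2,\dots$, is convergent.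
   Context: $M^\dagger$ is the Moore–Penrose inverse of $M$; $\rho(\cdot)$ denotes the spectral radius; $H^{-1/2}$ is the inverse of the symmetric positive definite square root of $H$. The iteration is called convergent if the sequence $x^{(k)}$ converges (to a solution of $Ax=b$) for every initial guess $x^{(0)}$; equivalently, with $T=I-M^\dagger A$, the limit $\lim_{k\to\infty}T^k$ exists. *)

theory Defs
  imports "Jordan_Normal_Form.Spectral_Radius" "Jordan_Normal_Form.DL_Rank"
begin

definition pos_def_mat :: "nat \<Rightarrow> real mat \<Rightarrow> bool" where
  "pos_def_mat n W \<longleftrightarrow> W \<in> carrier_mat n n \<and>
     (\<forall>x \<in> carrier_vec n. x \<noteq> 0\<^sub>v n \<longrightarrow> x \<bullet> (W *\<^sub>v x) > 0)"

definition mp_inverse :: "real mat \<Rightarrow> real mat" where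
  "mp_inverse A = (THE X. X \<in> carrier_mat (dim_col A) (dim_row A) \<and>
     A * X * A = A \<and> X * A * X = X \<and>
     (A * X)\<^sup>T = A * X \<and> (X * A)\<^sup>T = X * A)"

definition spd_sqrt :: "real mat \<Rightarrow> real mat" where
  "spd_sqrt H = (THE R. R\<^sup>T = R \<and> pos_def_mat (dim_row H) R \<and> R * R = H)"

definition inv_mat :: "real mat \<Rightarrow> real mat" where
  "inv_mat R = (THE X. X \<in> carrier_mat (dim_row R) (dim_row R) \<and>
     R * X = 1\<^sub>m (dim_row R) \<and> X * R = 1\<^sub>m (dim_row R))"

fun iterate :: "real mat \<Rightarrow> real mat \<Rightarrow> real vec \<Rightarrow> real vec \<Rightarrow> nat \<Rightarrow> real vec" where
  "iterate A M b x0 0 = x0"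
| "iterate A M b x0 (Suc k) =
     iterate A M b x0 k + mp_inverse M *\<^sub>v (b - A *\<^sub>v iterate A M b x0 k)"

definition iteration_convergent :: "nat \<Rightarrow> real mat \<Rightarrow> real mat \<Rightarrow> real vec \<Rightarrow> bool" where
  "iteration_convergent N A M b \<longleftrightarrow>
     (\<forall>x0 \<in> carrier_vec N. \<exists>L \<in> carrier_vec N.
        \<forall>i < N. (\<lambda>k. iterate A M b x0 k $ i) \<longlonglongrightarrow> L $ i)"

end

theory Submission
  imports Defs
begin

text \<open>Let T = I - M^+ A, Q = M^+ M and A y = b. Since M M^+ A = A, the kernel of M lies in the
  kernel of A and Q (T Q) = T Q, so the error of the k-th iterate is d + (T Q)^k Q (x0 - y) with d in
  the kernel of M. It therefore suffices that T Q has spectral radius below 1. An eigenvector z of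
  T Q for an eigenvalue l /= 0 satisfies Q z = z and A z = (1 - l) M z. Its first block x satisfies
  B x = 0 and x^* W x = (1 - l) omega x^* H x, and x /= 0 as otherwise z = 0. Since
  x^* W x = x^* H x + x^* S x with x^* S x imaginary and of modulus at most
  rho(H^-1/2 S H^-1/2) x^* H x, the hypothesis on omega forces |l| < 1.\<close>

abbreviation cmat :: "real mat \<Rightarrow> complex mat" where
  "cmat G \<equiv> map_mat complex_of_real G"

lemma scalar_prod_self_nonneg: fixes v :: "real vec" shows "v \<bullet> v \<ge> 0"
  unfolding scalar_prod_def by (intro sum_nonneg) auto

lemma scalar_prod_self_eq_zeroD:
  fixes v :: "real vec"
  assumes "v \<in> carrier_vec n" "v \<bullet> v = 0"
  shows "v = 0\<^sub>v n"
proof -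
  have "\<forall>i\<in>{0..<n}. v$i * v$i = 0" using assms unfolding scalar_prod_def
    using sum_nonneg_eq_0_iff[of "{0..<n}" "\<lambda>i. v$i * v$i"] by auto
  thus ?thesis using assms(1) by (intro eq_vecI) auto
qed

lemma cauchy_schwarz_scalar_prod:
  fixes u v :: "real vec"
  assumes u: "u \<in> carrier_vec n" and v: "v \<in> carrier_vec n"
  shows "(u \<bullet> v)^2 \<le> (u \<bullet> u) * (v \<bullet> v)"
proof -
  define a where "a = v \<bullet> v"
  define t where "t = u \<bullet> v"
  have sa: "a = (\<Sum>i<n. v$i * v$i)" unfolding a_def scalar_prod_def using v by (simp add: atLeast0LessThan)
  have st: "t = (\<Sum>i<n. u$i * v$i)" unfolding t_def scalar_prod_def using v by (simp add: atLeast0LessThan)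
  have su: "u \<bullet> u = (\<Sum>i<n. u$i * u$i)" unfolding scalar_prod_def using u by (simp add: atLeast0LessThan)
  have "0 \<le> (\<Sum>i<n. (a * u$i - t * v$i)^2)" by (intro sum_nonneg) auto
  also have "\<dots> = a*a * (\<Sum>i<n. u$i * u$i) - 2*a*t*(\<Sum>i<n. u$i * v$i) + t*t*(\<Sum>i<n. v$i * v$i)"
    by (simp add: power2_eq_square algebra_simps sum.distrib sum_distrib_left sum_subtractf)
  also have "\<dots> = a * (a * (u \<bullet> u) - t^2)" unfolding su st[symmetric] sa[symmetric]
    by (simp add: power2_eq_square algebra_simps)
  finally have *: "0 \<le> a * (a * (u \<bullet> u) - t^2)" .
  show ?thesis
  proof (cases "a = 0")
    case True
    hence "v = 0\<^sub>v n" using scalar_prod_self_eq_zeroD[OF v] unfolding a_def by simp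
    thus ?thesis using u by simp
  next
    case False
    with scalar_prod_self_nonneg[of v] have "a > 0" unfolding a_def by auto
    with * have "a * (u \<bullet> u) - t^2 \<ge> 0" by (simp add: zero_le_mult_iff)
    thus ?thesis unfolding t_def[symmetric] a_def[symmetric] by (simp add: algebra_simps)
  qed
qed

lemma mult_mat_vec_zero: "A \<in> carrier_mat n m \<Longrightarrow> A *\<^sub>v 0\<^sub>v m = 0\<^sub>v n"
  by (intro eq_vecI) (auto simp: scalar_prod_def)

lemma mat_eq_by_mult_vec:
  fixes F G :: "'a :: comm_ring_1 mat"
  assumes F: "F \<in> carrier_mat r c" and G: "G \<in> carrier_mat r c"
    and eq: "\<And>v. v \<in> carrier_vec c \<Longrightarrow> F *\<^sub>v v = G *\<^sub>v v"
  shows "F = G"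
proof (rule eq_matI)
  fix i j assume "i < dim_row G" "j < dim_col G"
  hence i: "i < r" and j: "j < c" using G by auto
  have "F $$ (i,j) = (F *\<^sub>v unit_vec c j) $ i" using F i j by simp
  also have "\<dots> = (G *\<^sub>v unit_vec c j) $ i" using eq[of "unit_vec c j"] by simp
  also have "\<dots> = G $$ (i,j)" using G i j by simp
  finally show "F $$ (i,j) = G $$ (i,j)" .
qed (insert F G, auto)

lemma smult_mat_mult_vec:
  fixes A :: "'a :: comm_ring_1 mat"
  assumes A: "A \<in> carrier_mat n m" and v: "v \<in> carrier_vec m"
  shows "(c \<cdot>\<^sub>m A) *\<^sub>v v = c \<cdot>\<^sub>v (A *\<^sub>v v)"
  by (rule eq_vecI, insert A v, auto simp: scalar_prod_def sum_distrib_left ac_simps)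

lemma scalar_prod_transpose_mult_vec:
  fixes B :: "real mat"
  assumes B: "B \<in> carrier_mat m n" and x: "x \<in> carrier_vec n" and y: "y \<in> carrier_vec m"
  shows "x \<bullet> (B\<^sup>T *\<^sub>v y) = y \<bullet> (B *\<^sub>v x)"
  using transpose_vec_mult_scalar[OF B x y] B x y by (simp add: comm_scalar_prod[of x n])

lemma smult_pow_mat:
  fixes A :: "'a :: comm_ring_1 mat"
  assumes A: "A \<in> carrier_mat n n"
  shows "(c \<cdot>\<^sub>m A) ^\<^sub>m k = c^k \<cdot>\<^sub>m (A ^\<^sub>m k)"
proof (induct k)
  case 0 thus ?case using A by (auto intro!: eq_matI)
next
  case (Suc k)
  have "(c \<cdot>\<^sub>m A) ^\<^sub>m Suc k = (c^k \<cdot>\<^sub>m (A ^\<^sub>m k)) * (c \<cdot>\<^sub>m A)" using Suc by simp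
  also have "\<dots> = c^k \<cdot>\<^sub>m ((A ^\<^sub>m k) * (c \<cdot>\<^sub>m A))"
    by (rule mult_smult_assoc_mat, insert A, auto)
  also have "(A ^\<^sub>m k) * (c \<cdot>\<^sub>m A) = c \<cdot>\<^sub>m ((A ^\<^sub>m k) * A)"
    by (rule mult_smult_distrib, insert A, auto)
  also have "c^k \<cdot>\<^sub>m (c \<cdot>\<^sub>m ((A ^\<^sub>m k) * A)) = (c^k * c) \<cdot>\<^sub>m ((A ^\<^sub>m k) * A)"
    by (rule eq_matI) auto
  finally show ?case by (simp add: ac_simps)
qed

lemma pow_mat_Suc_mult_vec:
  assumes G: "G \<in> carrier_mat n n" and w: "w \<in> carrier_vec n"
  shows "G ^\<^sub>m Suc k *\<^sub>v w = G *\<^sub>v (G ^\<^sub>m k *\<^sub>v w)"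
  using w
proof (induct k arbitrary: w)
  case 0 thus ?case using G by simp
next
  case (Suc k)
  have Gw: "G *\<^sub>v w \<in> carrier_vec n" using G Suc.prems by simp
  have "G ^\<^sub>m Suc (Suc k) *\<^sub>v w = G ^\<^sub>m Suc k *\<^sub>v (G *\<^sub>v w)"
    unfolding pow_mat.simps(2)[of G "Suc k"] using G Suc.prems by (intro assoc_mult_mat_vec) auto
  also have "\<dots> = G *\<^sub>v (G ^\<^sub>m k *\<^sub>v (G *\<^sub>v w))" by (rule Suc.hyps[OF Gw])
  also have "G ^\<^sub>m k *\<^sub>v (G *\<^sub>v w) = G ^\<^sub>m Suc k *\<^sub>v w"
    unfolding pow_mat.simps(2) using G Suc.prems by (intro assoc_mult_mat_vec[symmetric]) auto
  finally show ?case .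
qed

section \<open>Spectral radius and growth of matrix powers\<close>

lemma spectral_radius_nonneg:
  assumes A: "A \<in> carrier_mat n n" and n: "n > 0"
  shows "spectral_radius A \<ge> 0"
  using spectral_radius_mem_max(1)[OF A n] by auto

lemma spectral_radius_smult_inverse_less_1:
  fixes A :: "complex mat"
  assumes A: "A \<in> carrier_mat n n" and n: "n > 0" and r: "spectral_radius A < r"
  shows "spectral_radius (complex_of_real (1/r) \<cdot>\<^sub>m A) < 1"
proof -
  have r0: "r > 0" using spectral_radius_nonneg[OF A n] r by auto
  let ?B = "complex_of_real (1/r) \<cdot>\<^sub>m A"
  have B: "?B \<in> carrier_mat n n" using A by auto
  from spectral_radius_mem_max(1)[OF B n] obtain e where e: "e \<in> spectrum ?B"
    and eq: "spectral_radius ?B = norm e" by auto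
  from e obtain v where "eigenvector ?B v e" unfolding spectrum_def eigenvalue_def by auto
  hence v: "v \<in> carrier_vec n" "v \<noteq> 0\<^sub>v n" and Bv: "?B *\<^sub>v v = e \<cdot>\<^sub>v v"
    unfolding eigenvector_def using B by auto
  have "?B *\<^sub>v v = complex_of_real (1/r) \<cdot>\<^sub>v (A *\<^sub>v v)" by (rule smult_mat_mult_vec[OF A v(1)])
  hence "complex_of_real r \<cdot>\<^sub>v (?B *\<^sub>v v) = A *\<^sub>v v" using r0
    by (auto simp: smult_smult_assoc)
  hence "A *\<^sub>v v = (complex_of_real r * e) \<cdot>\<^sub>v v" unfolding Bv by (auto simp: smult_smult_assoc)
  hence "eigenvector A v (complex_of_real r * e)" unfolding eigenvector_def using A v by auto
  hence "complex_of_real r * e \<in> spectrum A" unfolding spectrum_def eigenvalue_def by auto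
  from spectral_radius_mem_max(2)[OF A n] this
  have "norm (complex_of_real r * e) \<le> spectral_radius A" by auto
  hence "r * norm e \<le> spectral_radius A" using r0 by (simp add: norm_mult)
  with r have "r * norm e < r * 1" by linarith
  hence "norm e < 1" using r0 by (simp only: mult_less_cancel_left_pos)
  thus ?thesis unfolding eq .
qed

lemma pow_mat_entry_bound:
  fixes G :: "real mat"
  assumes G: "G \<in> carrier_mat n n" and n: "n > 0" and r: "spectral_radius (cmat G) < r"
  shows "\<exists>c. \<forall>k i j. i < n \<longrightarrow> j < n \<longrightarrow> \<bar>(G ^\<^sub>m k) $$ (i,j)\<bar> \<le> c * r^k"
proof -
  have Gc: "cmat G \<in> carrier_mat n n" using G by auto
  have r0: "r > 0" using spectral_radius_nonneg[OF Gc n] r by auto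
  let ?B = "complex_of_real (1/r) \<cdot>\<^sub>m cmat G"
  have B: "?B \<in> carrier_mat n n" using G by auto
  from spectral_radius_jnf_norm_bound_less_1_upper_triangular
    [OF B spectral_radius_smult_inverse_less_1[OF Gc n r]]
  obtain c where c: "\<And>k. norm_bound (?B ^\<^sub>m k) c" by auto
  have B': "?B = cmat ((1/r) \<cdot>\<^sub>m G)" by (rule eq_matI, auto)
  show ?thesis
  proof (intro exI allI impI)
    fix k i j assume i: "i < n" and j: "j < n"
    have "?B ^\<^sub>m k = cmat (((1/r) \<cdot>\<^sub>m G) ^\<^sub>m k)"
      unfolding B' by (rule of_real_hom.mat_hom_pow[symmetric], insert G, auto)
    also have "((1/r) \<cdot>\<^sub>m G) ^\<^sub>m k = (1/r)^k \<cdot>\<^sub>m (G ^\<^sub>m k)" by (rule smult_pow_mat[OF G])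
    finally have "norm ((?B ^\<^sub>m k) $$ (i,j)) = \<bar>(1/r)^k * (G ^\<^sub>m k) $$ (i,j)\<bar>"
      using i j G by (simp add: norm_mult norm_power norm_divide abs_mult power_abs)
    moreover have "norm ((?B ^\<^sub>m k) $$ (i,j)) \<le> c" using c[of k] i j G unfolding norm_bound_def by auto
    ultimately have "\<bar>(G ^\<^sub>m k) $$ (i,j)\<bar> / r^k \<le> c" using r0 by (simp add: abs_mult power_divide)
    thus "\<bar>(G ^\<^sub>m k) $$ (i,j)\<bar> \<le> c * r^k" using r0 by (simp add: divide_le_eq)
  qed
qed

lemma pow_mat_mult_vec_bound:
  fixes G :: "real mat"
  assumes G: "G \<in> carrier_mat n n" and n: "n > 0" and r: "spectral_radius (cmat G) < r"
    and u: "u \<in> carrier_vec n"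
  shows "\<exists>c. \<forall>k i. i < n \<longrightarrow> \<bar>(G ^\<^sub>m k *\<^sub>v u) $ i\<bar> \<le> c * r^k"
proof -
  from pow_mat_entry_bound[OF G n r] obtain c where
    c: "\<And>k i j. i < n \<Longrightarrow> j < n \<Longrightarrow> \<bar>(G ^\<^sub>m k) $$ (i,j)\<bar> \<le> c * r^k" by auto
  define L where "L = (\<Sum>j<n. \<bar>u $ j\<bar>)"
  show ?thesis
  proof (intro exI allI impI)
    fix k i assume i: "i < n"
    have "(G ^\<^sub>m k *\<^sub>v u) $ i = (\<Sum>j<n. (G ^\<^sub>m k) $$ (i,j) * u $ j)"
      using i G u by (simp add: scalar_prod_def row_def atLeast0LessThan)
    also have "\<bar>\<dots>\<bar> \<le> (\<Sum>j<n. \<bar>(G ^\<^sub>m k) $$ (i,j) * u $ j\<bar>)" by (rule sum_abs)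
    also have "\<dots> \<le> (\<Sum>j<n. c * r^k * \<bar>u $ j\<bar>)"
      by (intro sum_mono, unfold abs_mult, rule mult_right_mono, insert c i, auto)
    also have "\<dots> = (c * L) * r^k" unfolding L_def by (simp add: sum_distrib_left ac_simps)
    finally show "\<bar>(G ^\<^sub>m k *\<^sub>v u) $ i\<bar> \<le> (c * L) * r^k" .
  qed
qed

lemma pow_mat_mult_vec_tendsto_zero:
  fixes G :: "real mat"
  assumes G: "G \<in> carrier_mat n n" and rho: "spectral_radius (cmat G) < 1"
    and u: "u \<in> carrier_vec n" and i: "i < n"
  shows "(\<lambda>k. (G ^\<^sub>m k *\<^sub>v u) $ i) \<longlonglongrightarrow> 0"
proof -
  have n: "n > 0" using i by simp
  define \<rho> where "\<rho> = spectral_radius (cmat G)"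
  have "\<rho> \<ge> 0" unfolding \<rho>_def by (rule spectral_radius_nonneg[OF _ n], insert G, auto)
  define r where "r = (1 + \<rho>) / 2"
  have r: "\<rho> < r" "r < 1" "r \<ge> 0" unfolding r_def using rho \<open>\<rho> \<ge> 0\<close> unfolding \<rho>_def by auto
  from pow_mat_mult_vec_bound[OF G n r(1)[unfolded \<rho>_def] u] i obtain c
    where c: "\<And>k. \<bar>(G ^\<^sub>m k *\<^sub>v u) $ i\<bar> \<le> c * r^k" by auto
  have lim: "(\<lambda>k. r^k) \<longlonglongrightarrow> 0" by (rule LIMSEQ_power_zero, insert r, simp)
  have bound: "norm ((G ^\<^sub>m k *\<^sub>v u) $ i) \<le> norm (r^k) * \<bar>c\<bar>" for k
  proof -
    have "c * r^k \<le> \<bar>c\<bar> * r^k" using r by (intro mult_right_mono) auto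
    thus ?thesis using c[of k] r by (simp add: power_abs ac_simps)
  qed
  show ?thesis
    by (rule tendsto_0_le[OF lim, of _ "\<bar>c\<bar>"], rule always_eventually, insert bound, simp)
qed

lemma le_of_forall_gt_mult_sq:
  fixes x a \<rho> :: real
  assumes "\<And>r. r > \<rho> \<Longrightarrow> x \<le> a * r^2"
  shows "x \<le> a * \<rho>^2"
proof (rule tendsto_lowerbound)
  show "((\<lambda>r. a * r^2) \<longlongrightarrow> a * \<rho>^2) (at_right \<rho>)" by (intro tendsto_intros)
  show "\<forall>\<^sub>F r in at_right \<rho>. x \<le> a * r^2"
    using eventually_at_right_less[of \<rho>] by (rule eventually_mono) (rule assms)
qed simp

lemma log_convex_seq_power_bound:
  fixes s :: "nat \<Rightarrow> real"
  assumes nn: "\<And>j. s j \<ge> 0" and lc: "\<And>j. (s (Suc j))^2 \<le> s j * s (Suc (Suc j))"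
  shows "s 1 ^ k * s 0 \<le> s 0 ^ k * s k"
proof -
  have step: "s j * s 1 \<le> s (Suc j) * s 0" for j
  proof (induct j)
    case 0 thus ?case by simp
  next
    case (Suc j)
    show ?case
    proof (cases "s j = 0")
      case True
      with lc[of j] have "(s (Suc j))^2 \<le> 0" by simp
      hence "s (Suc j) = 0" by simp
      thus ?thesis using nn by simp
    next
      case False
      from False nn[of j] have pos: "s j > 0" by linarith
      have "s (Suc j) * s j * s 1 \<le> s (Suc j) * (s (Suc j) * s 0)"
        using Suc mult_left_mono[OF Suc nn[of "Suc j"]] by (simp add: algebra_simps)
      also have "\<dots> = (s (Suc j))^2 * s 0" by (simp add: power2_eq_square)
      also have "\<dots> \<le> s j * s (Suc (Suc j)) * s 0" by (rule mult_right_mono[OF lc nn])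
      finally have "s j * (s (Suc j) * s 1) \<le> s j * (s (Suc (Suc j)) * s 0)" by (simp add: algebra_simps)
      thus ?thesis using pos by simp
    qed
  qed
  show ?thesis
  proof (induct k)
    case 0 thus ?case by simp
  next
    case (Suc k)
    have "s 1 ^ Suc k * s 0 = s 1 * (s 1 ^ k * s 0)" by simp
    also have "\<dots> \<le> s 1 * (s 0 ^ k * s k)" by (rule mult_left_mono[OF Suc nn])
    also have "\<dots> = s 0 ^ k * (s k * s 1)" by simp
    also have "\<dots> \<le> s 0 ^ k * (s (Suc k) * s 0)" by (rule mult_left_mono[OF step], simp add: nn)
    also have "\<dots> = s 0 ^ Suc k * s (Suc k)" by simp
    finally show ?case .
  qed
qed

lemma log_convex_seq_ratio_bound:
  fixes s :: "nat \<Rightarrow> real" and \<rho> :: real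
  assumes nn: "\<And>j. s j \<ge> 0" and lc: "\<And>j. (s (Suc j))^2 \<le> s j * s (Suc (Suc j))"
    and rho: "\<rho> \<ge> 0" and growth: "\<And>r. r > \<rho> \<Longrightarrow> \<exists>C. \<forall>k. s k \<le> C * (r^2)^k"
  shows "s 1 \<le> s 0 * \<rho>^2"
proof (rule le_of_forall_gt_mult_sq)
  fix r assume r: "r > \<rho>"
  show "s 1 \<le> s 0 * r^2"
  proof (cases "s 0 = 0")
    case True
    with lc[of 0] have "(s 1)^2 \<le> 0" by simp
    thus ?thesis using True by simp
  next
    case False
    with nn[of 0] have s0: "s 0 > 0" by linarith
    have r0: "r > 0" using r rho by simp
    from growth[OF r] obtain C where C: "\<And>k. s k \<le> C * (r^2)^k" by auto
    define x where "x = s 1 / (s 0 * r^2)"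
    have xk: "x^k \<le> C / s 0" for k
    proof -
      have pos: "s 0 ^ k * (r^2)^k > 0" using s0 r0 by simp
      have "x^k * (s 0 ^ k * (r^2)^k) * s 0 = s 1 ^ k * s 0" unfolding x_def using s0 r0
        by (simp add: power_divide power_mult_distrib)
      also have "\<dots> \<le> s 0 ^ k * s k" by (rule log_convex_seq_power_bound[of s, OF nn lc])
      also have "\<dots> \<le> s 0 ^ k * (C * (r^2)^k)" using s0 C[of k] by (intro mult_left_mono) auto
      finally have "(x^k * s 0) * (s 0 ^ k * (r^2)^k) \<le> C * (s 0 ^ k * (r^2)^k)"
        by (simp add: ac_simps)
      hence "x^k * s 0 \<le> C" using pos by (rule mult_right_le_imp_le)
      thus ?thesis using s0 by (simp add: le_divide_eq)
    qed
    have "x \<le> 1"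
    proof (rule ccontr)
      assume "\<not> x \<le> 1"
      hence "x > 1" by simp
      from real_arch_pow[OF this, of "C / s 0"] obtain k where "C / s 0 < x^k" by auto
      with xk[of k] show False by simp
    qed
    thus ?thesis unfolding x_def using s0 r0 by (simp add: divide_le_eq)
  qed
qed

lemma pow_mat_mult_vec_norm_growth:
  fixes G :: "real mat"
  assumes G: "G \<in> carrier_mat n n" and n: "n > 0" and r: "spectral_radius (cmat G) < r"
    and w: "w \<in> carrier_vec n"
  shows "\<exists>C. \<forall>k. (G ^\<^sub>m k *\<^sub>v w) \<bullet> (G ^\<^sub>m k *\<^sub>v w) \<le> C * (r^2)^k"
proof -
  from pow_mat_mult_vec_bound[OF G n r w] obtain c
    where c: "\<And>k i. i < n \<Longrightarrow> \<bar>(G ^\<^sub>m k *\<^sub>v w) $ i\<bar> \<le> c * r^k" by auto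
  show ?thesis
  proof (intro exI allI)
    fix k
    define z where "z = G ^\<^sub>m k *\<^sub>v w"
    have zc: "z \<in> carrier_vec n" unfolding z_def by (rule mult_mat_vec_carrier[OF pow_carrier_mat[OF G] w])
    have "z \<bullet> z = (\<Sum>i<n. (z $ i)^2)" unfolding scalar_prod_def using zc
      by (simp add: atLeast0LessThan power2_eq_square)
    also have "\<dots> \<le> (\<Sum>i<n. (c * r^k)^2)"
    proof (rule sum_mono)
      fix i assume "i \<in> {..<n}"
      hence "\<bar>z $ i\<bar> \<le> c * r^k" using c unfolding z_def by simp
      also have "\<dots> \<le> \<bar>c * r^k\<bar>" by simp
      finally show "(z $ i)^2 \<le> (c * r^k)^2" by (simp add: abs_le_square_iff)
    qed
    also have "\<dots> = (n * c^2) * (r^2)^k" by (simp add: power_mult_distrib power_mult[symmetric] ac_simps)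
    finally show "(G ^\<^sub>m k *\<^sub>v w) \<bullet> (G ^\<^sub>m k *\<^sub>v w) \<le> (n * c^2) * (r^2)^k" unfolding z_def .
  qed
qed

text \<open>Here |G^(j+1) w|^2 = +-(G^(j+2) w).(G^j w), so this is Cauchy-Schwarz.\<close>
lemma sym_or_skew_pow_log_convex:
  fixes G :: "real mat"
  assumes G: "G \<in> carrier_mat n n" and sym: "G\<^sup>T = G \<or> G\<^sup>T = - G" and w: "w \<in> carrier_vec n"
  shows "((G ^\<^sub>m Suc j *\<^sub>v w) \<bullet> (G ^\<^sub>m Suc j *\<^sub>v w))^2
    \<le> ((G ^\<^sub>m j *\<^sub>v w) \<bullet> (G ^\<^sub>m j *\<^sub>v w)) * ((G ^\<^sub>m Suc (Suc j) *\<^sub>v w) \<bullet> (G ^\<^sub>m Suc (Suc j) *\<^sub>v w))"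
proof -
  define z where "z j = G ^\<^sub>m j *\<^sub>v w" for j
  have zc: "z j \<in> carrier_vec n" for j unfolding z_def by (rule mult_mat_vec_carrier[OF pow_carrier_mat[OF G] w])
  have zS: "z (Suc j) = G *\<^sub>v z j" for j unfolding z_def by (rule pow_mat_Suc_mult_vec[OF G w])
  have Gz: "G *\<^sub>v z j \<in> carrier_vec n" using G zc by auto
  have e1: "z (Suc j) \<bullet> z (Suc j) = (G\<^sup>T *\<^sub>v z (Suc j)) \<bullet> z j"
    unfolding zS using transpose_vec_mult_scalar[OF G zc Gz] by simp
  have "(z (Suc j) \<bullet> z (Suc j))^2 = (z (Suc (Suc j)) \<bullet> z j)^2"
  proof (cases "G\<^sup>T = G")
    case True
    thus ?thesis unfolding e1 True zS[of "Suc j"] by simp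
  next
    case False
    with sym have T: "G\<^sup>T = - G" by simp
    have "(G\<^sup>T *\<^sub>v z (Suc j)) \<bullet> z j = - (z (Suc (Suc j)) \<bullet> z j)"
      unfolding T zS[of "Suc j"] using G zc[of "Suc j"] zc[of j]
      by (subst uminus_mult_mat_vec, auto)
    thus ?thesis unfolding e1 by simp
  qed
  also have "\<dots> \<le> (z (Suc (Suc j)) \<bullet> z (Suc (Suc j))) * (z j \<bullet> z j)"
    by (rule cauchy_schwarz_scalar_prod[OF zc zc])
  finally show ?thesis unfolding z_def by (simp add: ac_simps)
qed

text \<open>Proved through the log-convexity of the squared norms of G^k w rather than the spectral
  theorem, which is derived from it.\<close>
lemma sym_or_skew_mult_vec_bound:
  fixes G :: "real mat"
  assumes G: "G \<in> carrier_mat n n" and n: "n > 0" and sym: "G\<^sup>T = G \<or> G\<^sup>T = - G"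
    and w: "w \<in> carrier_vec n"
  shows "(G *\<^sub>v w) \<bullet> (G *\<^sub>v w) \<le> (spectral_radius (cmat G))^2 * (w \<bullet> w)"
proof -
  define s where "s j = (G ^\<^sub>m j *\<^sub>v w) \<bullet> (G ^\<^sub>m j *\<^sub>v w)" for j
  have "s 1 \<le> s 0 * (spectral_radius (cmat G))^2"
  proof (rule log_convex_seq_ratio_bound[of s])
    show "s j \<ge> 0" for j unfolding s_def by (rule scalar_prod_self_nonneg)
    show "(s (Suc j))^2 \<le> s j * s (Suc (Suc j))" for j
      unfolding s_def by (rule sym_or_skew_pow_log_convex[OF G sym w])
    show "spectral_radius (cmat G) \<ge> 0" by (rule spectral_radius_nonneg[OF _ n], insert G, auto)
    show "\<exists>C. \<forall>k. s k \<le> C * (r^2)^k" if "r > spectral_radius (cmat G)" for r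
      unfolding s_def by (rule pow_mat_mult_vec_norm_growth[OF G n that w])
  qed
  moreover have "G ^\<^sub>m 0 *\<^sub>v w = w" "G ^\<^sub>m 1 *\<^sub>v w = G *\<^sub>v w"
    using w carrier_matD[OF G] pow_mat_Suc_mult_vec[OF G w, of 0] by simp_all
  ultimately show ?thesis unfolding s_def by (simp add: ac_simps)
qed

lemma map_vec_Re_Im_mult_mat_vec:
  fixes G :: "real mat"
  assumes G: "G \<in> carrier_mat n m" and z: "z \<in> carrier_vec m"
  shows "map_vec Re (cmat G *\<^sub>v z) = G *\<^sub>v map_vec Re z"
    "map_vec Im (cmat G *\<^sub>v z) = G *\<^sub>v map_vec Im z"
  by (rule eq_vecI, insert G z, auto simp: scalar_prod_def Re_sum Im_sum)+

lemma map_vec_Re_Im_smult_vec: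
  fixes z :: "complex vec"
  shows "map_vec Re (e \<cdot>\<^sub>v z) = Re e \<cdot>\<^sub>v map_vec Re z - Im e \<cdot>\<^sub>v map_vec Im z"
    "map_vec Im (e \<cdot>\<^sub>v z) = Im e \<cdot>\<^sub>v map_vec Re z + Re e \<cdot>\<^sub>v map_vec Im z"
  by (rule eq_vecI, auto)+

lemma complex_vec_eq_zeroI:
  fixes z :: "complex vec"
  assumes z: "z \<in> carrier_vec n" and "map_vec Re z = 0\<^sub>v n" and "map_vec Im z = 0\<^sub>v n"
  shows "z = 0\<^sub>v n"
proof (rule eq_vecI)
  fix i assume "i < dim_vec (0\<^sub>v n :: complex vec)"
  hence i: "i < n" by simp
  from assms(2) have "Re (z $ i) = 0" using i z by (metis index_map_vec(1) index_zero_vec(1) carrier_vecD)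
  moreover from assms(3) have "Im (z $ i) = 0" using i z by (metis index_map_vec(1) index_zero_vec(1) carrier_vecD)
  ultimately show "z $ i = 0\<^sub>v n $ i" using i by (simp add: complex_eq_iff)
qed (insert z, auto)

lemma symmetric_real_eigenvector:
  fixes G :: "real mat"
  assumes G: "G \<in> carrier_mat n n" and n: "n > 0" and sym: "G\<^sup>T = G"
  shows "\<exists>v t. v \<in> carrier_vec n \<and> v \<noteq> 0\<^sub>v n \<and> G *\<^sub>v v = t \<cdot>\<^sub>v v \<and> \<bar>t\<bar> = spectral_radius (cmat G)"
proof -
  have Gc: "cmat G \<in> carrier_mat n n" using G by auto
  from spectral_radius_mem_max(1)[OF Gc n] obtain e where e: "e \<in> spectrum (cmat G)"
    and eq: "spectral_radius (cmat G) = norm e" by auto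
  from e obtain z where "eigenvector (cmat G) z e" unfolding spectrum_def eigenvalue_def by auto
  hence z: "z \<in> carrier_vec n" "z \<noteq> 0\<^sub>v n" and Gz: "cmat G *\<^sub>v z = e \<cdot>\<^sub>v z"
    unfolding eigenvector_def using Gc by auto
  define p where "p = map_vec Re z"
  define q where "q = map_vec Im z"
  have p: "p \<in> carrier_vec n" and q: "q \<in> carrier_vec n" unfolding p_def q_def using z by auto
  have Gp: "G *\<^sub>v p = Re e \<cdot>\<^sub>v p - Im e \<cdot>\<^sub>v q"
    using arg_cong[OF Gz, of "map_vec Re"]
    unfolding map_vec_Re_Im_mult_mat_vec[OF G z(1)] map_vec_Re_Im_smult_vec p_def q_def .
  have Gq: "G *\<^sub>v q = Im e \<cdot>\<^sub>v p + Re e \<cdot>\<^sub>v q"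
    using arg_cong[OF Gz, of "map_vec Im"]
    unfolding map_vec_Re_Im_mult_mat_vec[OF G z(1)] map_vec_Re_Im_smult_vec p_def q_def .
  have "(G\<^sup>T *\<^sub>v q) \<bullet> p = q \<bullet> (G *\<^sub>v p)" by (rule transpose_vec_mult_scalar[OF G p q])
  hence "(G *\<^sub>v q) \<bullet> p = q \<bullet> (G *\<^sub>v p)" unfolding sym .
  hence "Im e * (p \<bullet> p) + Re e * (q \<bullet> p) = Re e * (q \<bullet> p) - Im e * (q \<bullet> q)"
    unfolding Gp Gq using p q
    by (simp add: add_scalar_prod_distrib scalar_prod_minus_distrib comm_scalar_prod[of q n p])
  hence "Im e * (p \<bullet> p + q \<bullet> q) = 0" by (simp add: algebra_simps)
  moreover have "p \<bullet> p + q \<bullet> q > 0"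
  proof -
    have "p \<noteq> 0\<^sub>v n \<or> q \<noteq> 0\<^sub>v n" using complex_vec_eq_zeroI[OF z(1)] z(2) unfolding p_def q_def by blast
    hence "p \<bullet> p \<noteq> 0 \<or> q \<bullet> q \<noteq> 0" using scalar_prod_self_eq_zeroD[OF p] scalar_prod_self_eq_zeroD[OF q] by blast
    thus ?thesis using scalar_prod_self_nonneg[of p] scalar_prod_self_nonneg[of q] by linarith
  qed
  ultimately have Ie: "Im e = 0" by simp
  hence Gp': "G *\<^sub>v p = Re e \<cdot>\<^sub>v p" and Gq': "G *\<^sub>v q = Re e \<cdot>\<^sub>v q" using Gp Gq p q by auto
  have ne: "norm e = \<bar>Re e\<bar>" using Ie by (simp add: cmod_def)
  show ?thesis
  proof (cases "p = 0\<^sub>v n")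
    case False
    thus ?thesis using p Gp' eq ne by auto
  next
    case True
    hence "q \<noteq> 0\<^sub>v n" using complex_vec_eq_zeroI[OF z(1)] z(2) unfolding p_def q_def by blast
    thus ?thesis using q Gq' eq ne by auto
  qed
qed

section \<open>Spectral theorem for real symmetric matrices\<close>

definition orthonormal_list :: "nat \<Rightarrow> real vec list \<Rightarrow> bool" where
  "orthonormal_list n ws \<longleftrightarrow> set ws \<subseteq> carrier_vec n \<and>
     (\<forall>i<length ws. \<forall>j<length ws. ws!i \<bullet> ws!j = (if i = j then 1 else 0))"

definition orthogonal_to :: "real vec list \<Rightarrow> real vec \<Rightarrow> bool" where
  "orthogonal_to ws w \<longleftrightarrow> (\<forall>i<length ws. ws!i \<bullet> w = 0)"

definition orth_compl_proj :: "nat \<Rightarrow> real vec list \<Rightarrow> real mat" where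
  "orth_compl_proj n ws = 1\<^sub>m n - mat_of_cols n ws * (mat_of_cols n ws)\<^sup>T"

lemma orthonormal_list_nth_carrier:
  "orthonormal_list n ws \<Longrightarrow> i < length ws \<Longrightarrow> ws!i \<in> carrier_vec n"
  unfolding orthonormal_list_def using nth_mem by blast

lemma transpose_mat_of_cols_mult_vec_nth:
  assumes "set ws \<subseteq> carrier_vec n" and i: "i < length ws"
  shows "((mat_of_cols n ws)\<^sup>T *\<^sub>v y) $ i = ws!i \<bullet> y"
proof -
  have "ws!i \<in> carrier_vec n" using assms nth_mem[OF i] by blast
  thus ?thesis using i by (simp add: col_mat_of_cols)
qed

lemma orthonormal_list_gram:
  assumes o: "orthonormal_list n ws"
  shows "(mat_of_cols n ws)\<^sup>T * mat_of_cols n ws = 1\<^sub>m (length ws)"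
proof (rule eq_matI)
  fix i j assume "i < dim_row (1\<^sub>m (length ws) :: real mat)" "j < dim_col (1\<^sub>m (length ws) :: real mat)"
  hence i: "i < length ws" and j: "j < length ws" by auto
  have c: "set ws \<subseteq> carrier_vec n" using o unfolding orthonormal_list_def by auto
  have "((mat_of_cols n ws)\<^sup>T * mat_of_cols n ws) $$ (i,j) = ws!i \<bullet> ws!j"
    using i j c orthonormal_list_nth_carrier[OF o] by (simp add: col_mat_of_cols)
  thus "((mat_of_cols n ws)\<^sup>T * mat_of_cols n ws) $$ (i,j) = 1\<^sub>m (length ws) $$ (i,j)"
    using o i j unfolding orthonormal_list_def by auto
qed auto

lemma orthonormal_list_snoc:
  assumes o: "orthonormal_list n ws" and u: "u \<in> carrier_vec n" and uu: "u \<bullet> u = 1"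
    and ou: "orthogonal_to ws u"
  shows "orthonormal_list n (ws @ [u])"
  unfolding orthonormal_list_def
proof (intro conjI allI impI)
  show "set (ws @ [u]) \<subseteq> carrier_vec n" using o u unfolding orthonormal_list_def by auto
  fix i j assume i: "i < length (ws @ [u])" and j: "j < length (ws @ [u])"
  have wu: "ws!i \<bullet> u = u \<bullet> ws!i" if "i < length ws" for i
    using comm_scalar_prod[OF orthonormal_list_nth_carrier[OF o that] u] .
  show "(ws @ [u]) ! i \<bullet> (ws @ [u]) ! j = (if i = j then 1 else 0)"
  proof (cases "i < length ws")
    case True note i' = this
    show ?thesis
    proof (cases "j < length ws")
      case True thus ?thesis using i' o unfolding orthonormal_list_def by (simp add: nth_append)
    next
      case False with j have "j = length ws" by simp
      thus ?thesis using i' ou unfolding orthogonal_to_def by (simp add: nth_append)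
    qed
  next
    case False with i have i': "i = length ws" by simp
    show ?thesis
    proof (cases "j < length ws")
      case True thus ?thesis using i' ou wu[OF True, symmetric] unfolding orthogonal_to_def
        by (simp add: nth_append)
    next
      case False with j have "j = length ws" by simp
      thus ?thesis using i' uu by (simp add: nth_append)
    qed
  qed
qed

lemma orth_compl_proj_carrier[simp]: "orth_compl_proj n ws \<in> carrier_mat n n"
  unfolding orth_compl_proj_def by auto

lemma orth_compl_proj_symmetric: "(orth_compl_proj n ws)\<^sup>T = orth_compl_proj n ws"
proof -
  have U: "mat_of_cols n ws \<in> carrier_mat n (length ws)" by simp
  show ?thesis unfolding orth_compl_proj_def using U
    by (subst transpose_minus, auto simp: transpose_mult[OF U, of _ n])
qed

lemma orthogonal_to_orth_compl_proj:
  assumes o: "orthonormal_list n ws" and x: "x \<in> carrier_vec n"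
  shows "orthogonal_to ws (orth_compl_proj n ws *\<^sub>v x)"
proof -
  define U where "U = mat_of_cols n ws"
  define P where "P = orth_compl_proj n ws"
  have U: "U \<in> carrier_mat n (length ws)" unfolding U_def by simp
  have P: "P \<in> carrier_mat n n" unfolding P_def by simp
  have UtU: "U\<^sup>T * U = 1\<^sub>m (length ws)" unfolding U_def by (rule orthonormal_list_gram[OF o])
  have UtP: "U\<^sup>T * P = 0\<^sub>m (length ws) n"
  proof -
    have "U\<^sup>T * P = U\<^sup>T * 1\<^sub>m n - U\<^sup>T * (U * U\<^sup>T)" unfolding P_def orth_compl_proj_def U_def[symmetric]
      by (rule mult_minus_distrib_mat, insert U, auto)
    also have "U\<^sup>T * (U * U\<^sup>T) = (U\<^sup>T * U) * U\<^sup>T" by (rule assoc_mult_mat[symmetric], insert U, auto)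
    also have "\<dots> = U\<^sup>T" unfolding UtU using U by simp
    finally show ?thesis using U by simp
  qed
  show ?thesis unfolding orthogonal_to_def P_def[symmetric]
  proof (intro allI impI)
    fix i assume i: "i < length ws"
    have "ws!i \<bullet> (P *\<^sub>v x) = (U\<^sup>T *\<^sub>v (P *\<^sub>v x)) $ i"
      unfolding U_def using transpose_mat_of_cols_mult_vec_nth[OF _ i] o
      unfolding orthonormal_list_def by simp
    also have "U\<^sup>T *\<^sub>v (P *\<^sub>v x) = (U\<^sup>T * P) *\<^sub>v x" by (rule assoc_mult_mat_vec[symmetric], insert U P x, auto)
    also have "\<dots> = 0\<^sub>v (length ws)" unfolding UtP using x by (intro eq_vecI) (auto simp: scalar_prod_def)
    finally show "ws!i \<bullet> (P *\<^sub>v x) = 0" using i by simp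
  qed
qed

lemma orth_compl_proj_fixes:
  assumes o: "orthonormal_list n ws" and w: "w \<in> carrier_vec n" and ow: "orthogonal_to ws w"
  shows "orth_compl_proj n ws *\<^sub>v w = w"
proof -
  define U where "U = mat_of_cols n ws"
  have U: "U \<in> carrier_mat n (length ws)" unfolding U_def by simp
  have Utw: "U\<^sup>T *\<^sub>v w = 0\<^sub>v (length ws)"
  proof (rule eq_vecI)
    fix i assume "i < dim_vec (0\<^sub>v (length ws) :: real vec)"
    hence i: "i < length ws" by simp
    have "(U\<^sup>T *\<^sub>v w) $ i = ws!i \<bullet> w"
      unfolding U_def using transpose_mat_of_cols_mult_vec_nth[OF _ i] o
      unfolding orthonormal_list_def by simp
    thus "(U\<^sup>T *\<^sub>v w) $ i = 0\<^sub>v (length ws) $ i" using ow i unfolding orthogonal_to_def by simp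
  qed (insert U, auto)
  have "orth_compl_proj n ws *\<^sub>v w = 1\<^sub>m n *\<^sub>v w - (U * U\<^sup>T) *\<^sub>v w"
    unfolding orth_compl_proj_def U_def[symmetric] by (rule minus_mult_distrib_mat_vec, insert U w, auto)
  also have "(U * U\<^sup>T) *\<^sub>v w = U *\<^sub>v (U\<^sup>T *\<^sub>v w)" by (rule assoc_mult_mat_vec, insert U w, auto)
  also have "\<dots> = 0\<^sub>v n" unfolding Utw by (rule mult_mat_vec_zero[OF U])
  finally show ?thesis using w by simp
qed

text \<open>If the complement of ws were trivial, the projection would vanish, so the columns of
  mat_of_cols n ws would form an orthonormal basis; comparing the traces of U U^T and U^T U then
  gives length ws = n.\<close>
lemma exists_nonzero_orthogonal_vec:
  assumes o: "orthonormal_list n ws" and k: "length ws < n"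
  shows "\<exists>w \<in> carrier_vec n. w \<noteq> 0\<^sub>v n \<and> orthogonal_to ws w"
proof (rule ccontr)
  assume contra: "\<not> ?thesis"
  define k where "k = length ws"
  define U where "U = mat_of_cols n ws"
  have U: "U \<in> carrier_mat n k" unfolding U_def k_def by simp
  have UtU: "U\<^sup>T * U = 1\<^sub>m k" using orthonormal_list_gram[OF o] unfolding U_def k_def .
  have P0: "orth_compl_proj n ws = 0\<^sub>m n n"
  proof (rule mat_eq_by_mult_vec[OF orth_compl_proj_carrier zero_carrier_mat])
    fix x :: "real vec" assume x: "x \<in> carrier_vec n"
    have "orth_compl_proj n ws *\<^sub>v x = 0\<^sub>v n"
      using contra orthogonal_to_orth_compl_proj[OF o x] mult_mat_vec_carrier[OF orth_compl_proj_carrier x]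
      by auto
    moreover have "0\<^sub>m n n *\<^sub>v x = (0\<^sub>v n :: real vec)" using x by (intro eq_vecI) (auto simp: scalar_prod_def)
    ultimately show "orth_compl_proj n ws *\<^sub>v x = 0\<^sub>m n n *\<^sub>v x" by simp
  qed
  have UUt: "U * U\<^sup>T = 1\<^sub>m n"
  proof (rule eq_matI)
    fix a b assume "a < dim_row (1\<^sub>m n :: real mat)" "b < dim_col (1\<^sub>m n :: real mat)"
    hence a: "a < n" and b: "b < n" by auto
    have "orth_compl_proj n ws $$ (a,b) = 0" using P0 a b by simp
    thus "(U * U\<^sup>T) $$ (a,b) = 1\<^sub>m n $$ (a,b)"
      unfolding orth_compl_proj_def U_def[symmetric] using a b U by simp
  qed (insert U, auto)
  have "real n = (\<Sum>a<n. (U * U\<^sup>T) $$ (a,a))" unfolding UUt by simp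
  also have "\<dots> = (\<Sum>a<n. \<Sum>i<k. U $$ (a,i) * U $$ (a,i))"
    using U by (intro sum.cong refl) (simp add: scalar_prod_def atLeast0LessThan)
  also have "\<dots> = (\<Sum>i<k. \<Sum>a<n. U $$ (a,i) * U $$ (a,i))" by (rule sum.swap)
  also have "\<dots> = (\<Sum>i<k. (U\<^sup>T * U) $$ (i,i))"
    using U by (intro sum.cong refl) (simp add: scalar_prod_def atLeast0LessThan)
  also have "\<dots> = real k" unfolding UtU by simp
  finally show False using k unfolding k_def by simp
qed

lemma symmetric_mult_vec_orthogonal_to:
  fixes H :: "real mat"
  assumes H: "H \<in> carrier_mat n n" and sym: "H\<^sup>T = H" and o: "orthonormal_list n ws"
    and inv: "\<And>i. i < length ws \<Longrightarrow> H *\<^sub>v ws!i = ls!i \<cdot>\<^sub>v ws!i"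
    and w: "w \<in> carrier_vec n" and ow: "orthogonal_to ws w"
  shows "orthogonal_to ws (H *\<^sub>v w)"
  unfolding orthogonal_to_def
proof (intro allI impI)
  fix i assume i: "i < length ws"
  note cw = orthonormal_list_nth_carrier[OF o i]
  have "ws!i \<bullet> (H *\<^sub>v w) = (H\<^sup>T *\<^sub>v ws!i) \<bullet> w"
    by (rule transpose_vec_mult_scalar[OF H w cw, symmetric])
  also have "\<dots> = ls!i * (ws!i \<bullet> w)" unfolding sym inv[OF i] using cw w by simp
  finally show "ws!i \<bullet> (H *\<^sub>v w) = 0" using ow i unfolding orthogonal_to_def by simp
qed

text \<open>The compression G = P H P of H to the orthogonal complement of ws is symmetric. An eigenvector
  of G for an eigenvalue of maximal modulus lies in the complement, where G agrees with H, unless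
  that eigenvalue is 0; then G = 0 by the norm bound, and any vector of the complement will do.\<close>
lemma symmetric_eigenvector_orthogonal_to:
  fixes H :: "real mat"
  assumes H: "H \<in> carrier_mat n n" and sym: "H\<^sup>T = H" and o: "orthonormal_list n ws"
    and k: "length ws < n" and inv: "\<And>i. i < length ws \<Longrightarrow> H *\<^sub>v ws!i = ls!i \<cdot>\<^sub>v ws!i"
  shows "\<exists>v t. v \<in> carrier_vec n \<and> v \<noteq> 0\<^sub>v n \<and> orthogonal_to ws v \<and> H *\<^sub>v v = t \<cdot>\<^sub>v v"
proof -
  have n: "n > 0" using k by simp
  define P where "P = orth_compl_proj n ws"
  have P: "P \<in> carrier_mat n n" unfolding P_def by simp
  have Pt: "P\<^sup>T = P" unfolding P_def by (rule orth_compl_proj_symmetric)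
  note cw = orthonormal_list_nth_carrier[OF o]
  have Hinv: "orthogonal_to ws (H *\<^sub>v w)" if "w \<in> carrier_vec n" "orthogonal_to ws w" for w
    by (rule symmetric_mult_vec_orthogonal_to[of H n ws ls w]) (use H sym o inv that in auto)
  define G where "G = P * H * P"
  have G: "G \<in> carrier_mat n n" unfolding G_def using P H by auto
  have Gt: "G\<^sup>T = G" unfolding G_def
    by (subst transpose_mult[of _ n n _ n], insert P H, auto simp: transpose_mult[OF P H] Pt sym)
  have Gv: "G *\<^sub>v x = P *\<^sub>v (H *\<^sub>v (P *\<^sub>v x))" if x: "x \<in> carrier_vec n" for x
    unfolding G_def using P H x by (simp add: assoc_mult_mat_vec[of _ n n _ n])
  have GH: "G *\<^sub>v w = H *\<^sub>v w" if w: "w \<in> carrier_vec n" and ow: "orthogonal_to ws w" for w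
    unfolding Gv[OF w] P_def orth_compl_proj_fixes[OF o w ow]
    using orth_compl_proj_fixes[OF o _ Hinv[OF w ow]] H w by simp
  from symmetric_real_eigenvector[OF G n Gt] obtain v t where v: "v \<in> carrier_vec n" "v \<noteq> 0\<^sub>v n"
    and Gvt: "G *\<^sub>v v = t \<cdot>\<^sub>v v" and tr: "\<bar>t\<bar> = spectral_radius (cmat G)" by auto
  show ?thesis
  proof (cases "t = 0")
    case False
    have vv: "v = (1/t) \<cdot>\<^sub>v (G *\<^sub>v v)" unfolding Gvt using False by (auto simp: smult_smult_assoc)
    have "orthogonal_to ws v" unfolding orthogonal_to_def
    proof (intro allI impI)
      fix i assume i: "i < length ws"
      have "ws!i \<bullet> v = (1/t) * (ws!i \<bullet> (P *\<^sub>v (H *\<^sub>v (P *\<^sub>v v))))"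
        by (subst vv, unfold Gv[OF v(1)], rule scalar_prod_smult_right, insert P cw[OF i], simp)
      also have "ws!i \<bullet> (P *\<^sub>v (H *\<^sub>v (P *\<^sub>v v))) = 0"
        using orthogonal_to_orth_compl_proj[OF o, of "H *\<^sub>v (P *\<^sub>v v)"] P H v i
        unfolding orthogonal_to_def P_def by auto
      finally show "ws!i \<bullet> v = 0" by simp
    qed
    moreover have "H *\<^sub>v v = t \<cdot>\<^sub>v v" using GH[OF v(1)] Gvt calculation by simp
    ultimately show ?thesis using v by blast
  next
    case True
    from exists_nonzero_orthogonal_vec[OF o k] obtain w where w: "w \<in> carrier_vec n" "w \<noteq> 0\<^sub>v n"
      and ow: "orthogonal_to ws w" by auto
    have "(G *\<^sub>v w) \<bullet> (G *\<^sub>v w) \<le> (spectral_radius (cmat G))^2 * (w \<bullet> w)"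
      by (rule sym_or_skew_mult_vec_bound[OF G n _ w(1)], insert Gt, simp)
    also have "\<dots> = 0" using tr True by simp
    moreover have "G *\<^sub>v w \<in> carrier_vec n" using G w by auto
    ultimately have "G *\<^sub>v w = 0\<^sub>v n"
      using scalar_prod_self_nonneg[of "G *\<^sub>v w"] scalar_prod_self_eq_zeroD[of "G *\<^sub>v w" n] by auto
    hence "H *\<^sub>v w = 0 \<cdot>\<^sub>v w" using GH[OF w(1) ow] w by (auto intro!: eq_vecI)
    thus ?thesis using w ow by blast
  qed
qed

lemma orthonormal_eigenvector_extension:
  fixes H :: "real mat"
  assumes H: "H \<in> carrier_mat n n" and sym: "H\<^sup>T = H" and o: "orthonormal_list n ws"
    and k: "length ws < n" and inv: "\<And>i. i < length ws \<Longrightarrow> H *\<^sub>v ws!i = ls!i \<cdot>\<^sub>v ws!i"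
  shows "\<exists>u t. orthonormal_list n (ws @ [u]) \<and> H *\<^sub>v u = t \<cdot>\<^sub>v u"
proof -
  from symmetric_eigenvector_orthogonal_to[OF H sym o k inv] obtain v t where v: "v \<in> carrier_vec n"
    "v \<noteq> 0\<^sub>v n" and ov: "orthogonal_to ws v" and Hv: "H *\<^sub>v v = t \<cdot>\<^sub>v v" by blast
  define a where "a = v \<bullet> v"
  have a: "a > 0" unfolding a_def
    using scalar_prod_self_nonneg[of v] scalar_prod_self_eq_zeroD[OF v(1)] v(2) by (metis order_le_less)
  define u where "u = (1 / sqrt a) \<cdot>\<^sub>v v"
  have u: "u \<in> carrier_vec n" unfolding u_def using v by simp
  have uu: "u \<bullet> u = 1" unfolding u_def using v a by (simp add: a_def[symmetric])
  have ou: "orthogonal_to ws u" unfolding u_def orthogonal_to_def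
    using ov v orthonormal_list_nth_carrier[OF o]
    by (auto simp: orthogonal_to_def scalar_prod_smult_right carrier_vecD)
  have Hu: "H *\<^sub>v u = t \<cdot>\<^sub>v u" unfolding u_def using H v Hv
    by (simp add: mult_mat_vec smult_smult_assoc mult.commute)
  show ?thesis using orthonormal_list_snoc[OF o u uu ou] Hu by blast
qed

lemma orthonormal_eigenvectors_exist:
  fixes H :: "real mat"
  assumes H: "H \<in> carrier_mat n n" and sym: "H\<^sup>T = H"
  shows "k \<le> n \<Longrightarrow> \<exists>ws ls. orthonormal_list n ws \<and> length ws = k \<and> length ls = k \<and>
    (\<forall>i<k. H *\<^sub>v ws!i = ls!i \<cdot>\<^sub>v ws!i)"
proof (induct k)
  case 0
  show ?case by (rule exI[of _ "[]"], rule exI[of _ "[]"], auto simp: orthonormal_list_def)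
next
  case (Suc k)
  then obtain ws ls where o: "orthonormal_list n ws" and l: "length ws = k" "length ls = k"
    and inv: "\<forall>i<k. H *\<^sub>v ws!i = ls!i \<cdot>\<^sub>v ws!i" by auto
  have k': "length ws < n" using Suc(2) l by simp
  have inv': "\<And>i. i < length ws \<Longrightarrow> H *\<^sub>v ws!i = ls!i \<cdot>\<^sub>v ws!i" using inv l by simp
  from orthonormal_eigenvector_extension[OF H sym o k' inv'] obtain u t
    where o': "orthonormal_list n (ws @ [u])" and Hu: "H *\<^sub>v u = t \<cdot>\<^sub>v u" by auto
  show ?case
  proof (intro exI[of _ "ws @ [u]"] exI[of _ "ls @ [t]"] conjI allI impI)
    show "orthonormal_list n (ws @ [u])" by (rule o')
    show "length (ws @ [u]) = Suc k" "length (ls @ [t]) = Suc k" using l by auto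
    fix i assume "i < Suc k"
    thus "H *\<^sub>v (ws @ [u]) ! i = (ls @ [t]) ! i \<cdot>\<^sub>v (ws @ [u]) ! i"
      using inv Hu l by (cases "i < k") (auto simp: nth_append)
  qed
qed

declare mat_diag_dim[simp]

lemma mat_diag_dims[simp]: "dim_row (mat_diag n f) = n" "dim_col (mat_diag n f) = n"
  unfolding mat_diag_def by auto

lemma transpose_mat_diag[simp]: fixes f :: "nat \<Rightarrow> real" shows "(mat_diag n f)\<^sup>T = mat_diag n f"
  unfolding mat_diag_def by (rule eq_matI) auto

lemma mat_diag_cong:
  fixes f g :: "nat \<Rightarrow> real"
  shows "(\<And>i. i < n \<Longrightarrow> f i = g i) \<Longrightarrow> mat_diag n f = mat_diag n g"
  unfolding mat_diag_def by (intro eq_matI) auto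

lemma mat_diag_add:
  fixes f g :: "nat \<Rightarrow> real"
  shows "mat_diag n f + mat_diag n g = mat_diag n (\<lambda>i. f i + g i)"
  unfolding mat_diag_def by (intro eq_matI) auto

lemma mat_diag_mult_vec:
  fixes f :: "nat \<Rightarrow> real"
  assumes y: "y \<in> carrier_vec n"
  shows "mat_diag n f *\<^sub>v y = vec n (\<lambda>j. f j * y $ j)"
proof (rule eq_vecI)
  fix j assume "j < dim_vec (vec n (\<lambda>j. f j * y $ j))"
  hence j: "j < n" by simp
  have "(mat_diag n f *\<^sub>v y) $ j = (\<Sum>l\<in>{0..<n}. (if j = l then f l else 0) * y $ l)"
    using j y by (simp add: scalar_prod_def mat_diag_def row_def)
  also have "\<dots> = (\<Sum>l\<in>{0..<n}. if l = j then f j * y $ j else 0)" by (rule sum.cong) auto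
  also have "\<dots> = f j * y $ j" using j by simp
  finally show "(mat_diag n f *\<^sub>v y) $ j = vec n (\<lambda>j. f j * y $ j) $ j" using j by simp
qed (insert y, auto simp: mat_diag_def)

theorem real_symmetric_diagonalization:
  fixes H :: "real mat"
  assumes H: "H \<in> carrier_mat n n" and sym: "H\<^sup>T = H"
  shows "\<exists>U d. U \<in> carrier_mat n n \<and> U\<^sup>T * U = 1\<^sub>m n \<and> U * U\<^sup>T = 1\<^sub>m n \<and>
    H = U * mat_diag n d * U\<^sup>T \<and> (\<forall>j<n. H *\<^sub>v col U j = d j \<cdot>\<^sub>v col U j)"
proof -
  from orthonormal_eigenvectors_exist[OF H sym le_refl] obtain ws ls where o: "orthonormal_list n ws"
    and l: "length ws = n" "length ls = n" and inv: "\<forall>i<n. H *\<^sub>v ws!i = ls!i \<cdot>\<^sub>v ws!i" by auto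
  define U where "U = mat_of_cols n ws"
  define d where "d j = ls!j" for j
  have cw: "i < n \<Longrightarrow> ws!i \<in> carrier_vec n" for i using orthonormal_list_nth_carrier[OF o] l by simp
  have U: "U \<in> carrier_mat n n" unfolding U_def using mat_of_cols_carrier(1)[of n ws] unfolding l .
  have UtU: "U\<^sup>T * U = 1\<^sub>m n" using orthonormal_list_gram[OF o] unfolding U_def l .
  have UUt: "U * U\<^sup>T = 1\<^sub>m n" using mat_mult_left_right_inverse[OF _ U UtU] U by simp
  have colU: "j < n \<Longrightarrow> col U j = ws!j" for j unfolding U_def using cw l by simp
  have HU: "H * U = U * mat_diag n d"
  proof (rule eq_matI)
    fix a j assume "a < dim_row (U * mat_diag n d)" "j < dim_col (U * mat_diag n d)"
    hence a: "a < n" and j: "j < n" using U by auto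
    have e: "(ws!j) $ a = U $$ (a,j)" using colU[OF j] a j U by (metis index_col carrier_matD(1) carrier_matD(2))
    have "(H * U) $$ (a,j) = (H *\<^sub>v col U j) $ a" using H U a j by simp
    also have "\<dots> = d j * (ws!j) $ a" unfolding colU[OF j] inv[rule_format, OF j] d_def
      using cw[OF j] a by simp
    also have "\<dots> = d j * U $$ (a,j)" using e by simp
    also have "\<dots> = (U * mat_diag n d) $$ (a,j)" unfolding mat_diag_mult_right[OF U] using a j by simp
    finally show "(H * U) $$ (a,j) = (U * mat_diag n d) $$ (a,j)" .
  qed (insert H U, auto)
  have "H = H * (U * U\<^sup>T)" unfolding UUt using H by simp
  also have "\<dots> = (H * U) * U\<^sup>T" using H U by (intro assoc_mult_mat[symmetric]) auto
  also have "\<dots> = U * mat_diag n d * U\<^sup>T" unfolding HU ..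
  finally have Hd: "H = U * mat_diag n d * U\<^sup>T" .
  show ?thesis using U UtU UUt Hd inv colU d_def by (intro exI[of _ U] exI[of _ d]) auto
qed

lemma orthogonal_conj_mult:
  fixes U :: "real mat" and f g :: "nat \<Rightarrow> real"
  assumes U: "U \<in> carrier_mat n n" and UtU: "U\<^sup>T * U = 1\<^sub>m n"
  shows "(U * mat_diag n f * U\<^sup>T) * (U * mat_diag n g * U\<^sup>T) = U * mat_diag n (\<lambda>i. f i * g i) * U\<^sup>T"
proof -
  have Df: "mat_diag n f \<in> carrier_mat n n" and Dg: "mat_diag n g \<in> carrier_mat n n" by auto
  have Ut: "U\<^sup>T \<in> carrier_mat n n" using U by auto
  have UDf: "U * mat_diag n f \<in> carrier_mat n n" using U by auto
  have UDg: "U * mat_diag n g \<in> carrier_mat n n" using U by auto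
  have C: "U * mat_diag n g * U\<^sup>T \<in> carrier_mat n n" using U by auto
  have "(U * mat_diag n f * U\<^sup>T) * (U * mat_diag n g * U\<^sup>T)
      = (U * mat_diag n f) * (U\<^sup>T * (U * mat_diag n g * U\<^sup>T))"
    by (rule assoc_mult_mat[OF UDf Ut C])
  also have "U\<^sup>T * (U * mat_diag n g * U\<^sup>T) = (U\<^sup>T * (U * mat_diag n g)) * U\<^sup>T"
    by (rule assoc_mult_mat[OF Ut UDg Ut, symmetric])
  also have "U\<^sup>T * (U * mat_diag n g) = (U\<^sup>T * U) * mat_diag n g"
    by (rule assoc_mult_mat[OF Ut U Dg, symmetric])
  also have "(U\<^sup>T * U) * mat_diag n g = mat_diag n g" unfolding UtU by simp
  also have "(U * mat_diag n f) * (mat_diag n g * U\<^sup>T) = (U * mat_diag n f * mat_diag n g) * U\<^sup>T"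
    by (rule assoc_mult_mat[OF UDf Dg Ut, symmetric])
  also have "U * mat_diag n f * mat_diag n g = U * (mat_diag n f * mat_diag n g)"
    by (rule assoc_mult_mat[OF U Df Dg])
  finally show ?thesis unfolding mat_diag_diag .
qed

lemma congruence_symmetric:
  fixes M P :: "real mat"
  assumes M: "M \<in> carrier_mat n n" and P: "P \<in> carrier_mat n n" and Pt: "P\<^sup>T = P"
  shows "(M * P * M\<^sup>T)\<^sup>T = M * P * M\<^sup>T"
proof -
  have Mt: "M\<^sup>T \<in> carrier_mat n n" using M by auto
  have "(M * P * M\<^sup>T)\<^sup>T = (M\<^sup>T)\<^sup>T * (M * P)\<^sup>T" by (rule transpose_mult, insert M P, auto)
  also have "(M * P)\<^sup>T = P\<^sup>T * M\<^sup>T" by (rule transpose_mult[OF M P])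
  also have "(M\<^sup>T)\<^sup>T * (P\<^sup>T * M\<^sup>T) = M * P * M\<^sup>T" unfolding Pt transpose_transpose
    by (rule assoc_mult_mat[symmetric, OF M P Mt])
  finally show ?thesis .
qed

lemma orthogonal_conj_symmetric:
  fixes U :: "real mat" and f :: "nat \<Rightarrow> real"
  assumes U: "U \<in> carrier_mat n n"
  shows "(U * mat_diag n f * U\<^sup>T)\<^sup>T = U * mat_diag n f * U\<^sup>T"
  by (rule congruence_symmetric[OF U mat_diag_dim transpose_mat_diag])

lemma orthogonal_conj_add:
  fixes U :: "real mat" and f g :: "nat \<Rightarrow> real"
  assumes U: "U \<in> carrier_mat n n"
  shows "U * mat_diag n f * U\<^sup>T + U * mat_diag n g * U\<^sup>T = U * mat_diag n (\<lambda>i. f i + g i) * U\<^sup>T"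
proof -
  have "U * mat_diag n f * U\<^sup>T + U * mat_diag n g * U\<^sup>T = (U * mat_diag n f + U * mat_diag n g) * U\<^sup>T"
    by (rule add_mult_distrib_mat[symmetric], insert U, auto)
  also have "U * mat_diag n f + U * mat_diag n g = U * (mat_diag n f + mat_diag n g)"
    by (rule mult_add_distrib_mat[symmetric], insert U, auto)
  finally show ?thesis unfolding mat_diag_add .
qed

lemma orthogonal_conj_quadratic_form:
  fixes U :: "real mat" and f :: "nat \<Rightarrow> real"
  assumes U: "U \<in> carrier_mat n n" and x: "x \<in> carrier_vec n"
  shows "x \<bullet> ((U * mat_diag n f * U\<^sup>T) *\<^sub>v x) = (\<Sum>j<n. f j * ((U\<^sup>T *\<^sub>v x) $ j)^2)"
proof -
  define y where "y = U\<^sup>T *\<^sub>v x"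
  have y: "y \<in> carrier_vec n" unfolding y_def using U x by auto
  have z: "mat_diag n f *\<^sub>v y \<in> carrier_vec n" using y by (simp add: mat_diag_mult_vec)
  have "(U * mat_diag n f * U\<^sup>T) *\<^sub>v x = (U * mat_diag n f) *\<^sub>v y" unfolding y_def
    using U x by (intro assoc_mult_mat_vec) auto
  also have "\<dots> = U *\<^sub>v (mat_diag n f *\<^sub>v y)" using U y by (intro assoc_mult_mat_vec) auto
  finally have "x \<bullet> ((U * mat_diag n f * U\<^sup>T) *\<^sub>v x) = x \<bullet> (U *\<^sub>v (mat_diag n f *\<^sub>v y))" by simp
  also have "\<dots> = y \<bullet> (mat_diag n f *\<^sub>v y)"
    using transpose_vec_mult_scalar[OF U z x] by (simp add: y_def)
  also have "\<dots> = (\<Sum>j<n. f j * (y $ j)^2)" unfolding mat_diag_mult_vec[OF y] using y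
    by (simp add: scalar_prod_def atLeast0LessThan power2_eq_square ac_simps)
  finally show ?thesis unfolding y_def .
qed

lemma orthogonal_conj_pos_def:
  fixes U :: "real mat" and f :: "nat \<Rightarrow> real"
  assumes U: "U \<in> carrier_mat n n" and UUt: "U * U\<^sup>T = 1\<^sub>m n" and f: "\<And>j. j < n \<Longrightarrow> f j > 0"
  shows "pos_def_mat n (U * mat_diag n f * U\<^sup>T)"
  unfolding pos_def_mat_def
proof (intro conjI ballI impI)
  show "U * mat_diag n f * U\<^sup>T \<in> carrier_mat n n" using U by auto
  fix x :: "real vec" assume x: "x \<in> carrier_vec n" and x0: "x \<noteq> 0\<^sub>v n"
  define y where "y = U\<^sup>T *\<^sub>v x"
  have y: "y \<in> carrier_vec n" unfolding y_def using U x by auto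
  have "y \<noteq> 0\<^sub>v n"
  proof
    assume "y = 0\<^sub>v n"
    hence "U *\<^sub>v y = 0\<^sub>v n" using mult_mat_vec_zero[OF U] by simp
    moreover have "U *\<^sub>v y = (U * U\<^sup>T) *\<^sub>v x" unfolding y_def using U x
      by (intro assoc_mult_mat_vec[symmetric]) auto
    hence "U *\<^sub>v y = x" unfolding UUt using x by simp
    ultimately show False using x0 by simp
  qed
  then obtain j where j: "j < n" and yj: "y $ j \<noteq> 0" using y by (metis eq_vecI carrier_vecD index_zero_vec)
  have "0 < (\<Sum>j<n. f j * (y $ j)^2)"
  proof (rule sum_pos2[of "{..<n}" j])
    show "0 < f j * (y $ j)^2" using f[OF j] yj by simp
    fix i assume "i \<in> {..<n}"
    thus "0 \<le> f i * (y $ i)^2" using f[of i] by simp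
  qed (insert j, auto)
  thus "x \<bullet> ((U * mat_diag n f * U\<^sup>T) *\<^sub>v x) > 0" unfolding orthogonal_conj_quadratic_form[OF U x] y_def .
qed

lemma orthogonal_col_eigenvalue:
  fixes H U :: "real mat"
  assumes U: "U \<in> carrier_mat n n" and UtU: "U\<^sup>T * U = 1\<^sub>m n" and j: "j < n"
    and ev: "H *\<^sub>v col U j = d \<cdot>\<^sub>v col U j"
  shows "col U j \<bullet> col U j = 1" and "col U j \<bullet> (H *\<^sub>v col U j) = d"
proof -
  have "(U\<^sup>T * U) $$ (j,j) = col U j \<bullet> col U j" using U j by simp
  thus unit: "col U j \<bullet> col U j = 1" unfolding UtU using j by simp
  have "col U j \<bullet> (d \<cdot>\<^sub>v col U j) = d * (col U j \<bullet> col U j)" by (rule scalar_prod_smult_right) simp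
  thus "col U j \<bullet> (H *\<^sub>v col U j) = d" unfolding ev unit by simp
qed

section \<open>Square roots, inverses and Moore-Penrose inverses\<close>

text \<open>If R1^2 = R2^2, then for an eigenvector v of D = R1 - R2 with eigenvalue d the identity
  R1 D + D R2 = R1^2 - R2^2 = 0 gives d (v.R1 v + v.R2 v) = 0, so d = 0.\<close>
lemma spd_square_root_unique:
  fixes R1 R2 :: "real mat"
  assumes R1: "pos_def_mat n R1" and R2: "pos_def_mat n R2"
    and s1: "R1\<^sup>T = R1" and s2: "R2\<^sup>T = R2" and eq: "R1 * R1 = R2 * R2"
  shows "R1 = R2"
proof -
  have R1c: "R1 \<in> carrier_mat n n" and R2c: "R2 \<in> carrier_mat n n"
    using R1 R2 unfolding pos_def_mat_def by auto
  define D where "D = R1 - R2"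
  have D: "D \<in> carrier_mat n n" unfolding D_def using R1c R2c by auto
  have Dt: "D\<^sup>T = D" unfolding D_def using R1c R2c s1 s2 by (simp add: transpose_minus)
  from real_symmetric_diagonalization[OF D Dt] obtain U d where U: "U \<in> carrier_mat n n"
    and UtU: "U\<^sup>T * U = 1\<^sub>m n" and Dd: "D = U * mat_diag n d * U\<^sup>T"
    and ev: "\<And>j. j < n \<Longrightarrow> D *\<^sub>v col U j = d j \<cdot>\<^sub>v col U j" by auto
  have d0: "d j = 0" if j: "j < n" for j
  proof -
    define v where "v = col U j"
    have v: "v \<in> carrier_vec n" unfolding v_def using U j by auto
    have v0: "v \<noteq> 0\<^sub>v n" using orthogonal_col_eigenvalue(1)[OF U UtU j ev[OF j]] v
      unfolding v_def[symmetric] by auto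
    have Dv: "D *\<^sub>v v = d j \<cdot>\<^sub>v v" using ev[OF j] unfolding v_def .
    have a1: "v \<bullet> (R1 *\<^sub>v v) > 0" using R1 v v0 unfolding pos_def_mat_def by auto
    have a2: "v \<bullet> (R2 *\<^sub>v v) > 0" using R2 v v0 unfolding pos_def_mat_def by auto
    have R2v: "R2 *\<^sub>v v \<in> carrier_vec n" using R2c v by auto
    have t1: "v \<bullet> (R1 *\<^sub>v (D *\<^sub>v v)) = v \<bullet> (R1 *\<^sub>v (R1 *\<^sub>v v)) - v \<bullet> (R1 *\<^sub>v (R2 *\<^sub>v v))"
      unfolding D_def using R1c R2c v
      by (simp add: minus_mult_distrib_mat_vec mult_minus_distrib_mat_vec scalar_prod_minus_distrib[of v n])
    have t2: "v \<bullet> (D *\<^sub>v (R2 *\<^sub>v v)) = v \<bullet> (R1 *\<^sub>v (R2 *\<^sub>v v)) - v \<bullet> (R2 *\<^sub>v (R2 *\<^sub>v v))"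
      unfolding D_def using R1c R2c v
      by (simp add: minus_mult_distrib_mat_vec scalar_prod_minus_distrib[of v n])
    have sq: "R1 *\<^sub>v (R1 *\<^sub>v v) = R2 *\<^sub>v (R2 *\<^sub>v v)"
      using eq R1c R2c v by (metis assoc_mult_mat_vec)
    have t3: "v \<bullet> (R1 *\<^sub>v (D *\<^sub>v v)) = d j * (v \<bullet> (R1 *\<^sub>v v))"
      unfolding Dv using R1c v by (simp add: mult_mat_vec)
    have "v \<bullet> (D *\<^sub>v (R2 *\<^sub>v v)) = (D\<^sup>T *\<^sub>v v) \<bullet> (R2 *\<^sub>v v)"
      by (rule transpose_vec_mult_scalar[OF D R2v v, symmetric])
    also have "\<dots> = d j * (v \<bullet> (R2 *\<^sub>v v))" unfolding Dt Dv using v R2v by simp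
    finally have t4: "v \<bullet> (D *\<^sub>v (R2 *\<^sub>v v)) = d j * (v \<bullet> (R2 *\<^sub>v v))" .
    have "d j * (v \<bullet> (R1 *\<^sub>v v) + v \<bullet> (R2 *\<^sub>v v)) = 0"
      using t1 t2 t3 t4 sq by (simp add: algebra_simps)
    thus ?thesis using a1 a2 by simp
  qed
  have "mat_diag n d = 0\<^sub>m n n" unfolding mat_diag_def using d0 by (intro eq_matI) auto
  hence D0: "D = 0\<^sub>m n n" unfolding Dd using U by simp
  show ?thesis
  proof (rule eq_matI)
    fix i j assume "i < dim_row R2" "j < dim_col R2"
    hence i: "i < n" and j: "j < n" using R2c by auto
    have "D $$ (i,j) = 0" using D0 i j by simp
    thus "R1 $$ (i,j) = R2 $$ (i,j)" unfolding D_def using i j R1c R2c by simp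
  qed (insert R1c R2c, auto)
qed

lemma inv_mat_eqI:
  fixes R X :: "real mat"
  assumes R: "R \<in> carrier_mat n n" and X: "X \<in> carrier_mat n n"
    and RX: "R * X = 1\<^sub>m n" and XR: "X * R = 1\<^sub>m n"
  shows "inv_mat R = X"
  unfolding inv_mat_def
proof (rule the1_equality)
  have dr: "dim_row R = n" using R by simp
  show "\<exists>!X. X \<in> carrier_mat (dim_row R) (dim_row R) \<and> R * X = 1\<^sub>m (dim_row R) \<and> X * R = 1\<^sub>m (dim_row R)"
    unfolding dr
  proof (rule ex1I[of _ X])
    fix Y assume Y: "Y \<in> carrier_mat n n \<and> R * Y = 1\<^sub>m n \<and> Y * R = 1\<^sub>m n"
    have Yc: "Y \<in> carrier_mat n n" using Y by simp
    have "Y = Y * (R * X)" unfolding RX using Yc by simp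
    also have "\<dots> = (Y * R) * X" using Y R X by (simp add: assoc_mult_mat[symmetric, of _ n n _ n _ n])
    also have "\<dots> = X" using Y X by simp
    finally show "Y = X" .
  qed (insert X RX XR, auto)
  show "X \<in> carrier_mat (dim_row R) (dim_row R) \<and> R * X = 1\<^sub>m (dim_row R) \<and> X * R = 1\<^sub>m (dim_row R)"
    using R X RX XR by simp
qed

lemma spd_sqrt_inv_mat:
  fixes H :: "real mat"
  assumes H: "H \<in> carrier_mat n n" and Ht: "H\<^sup>T = H" and Hpd: "pos_def_mat n H"
  defines "R \<equiv> spd_sqrt H" and "Y \<equiv> inv_mat (spd_sqrt H)"
  shows "R \<in> carrier_mat n n \<and> R\<^sup>T = R \<and> R * R = H \<and>
    Y \<in> carrier_mat n n \<and> Y\<^sup>T = Y \<and> Y * R = 1\<^sub>m n"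
proof -
  from real_symmetric_diagonalization[OF H Ht] obtain U d where U: "U \<in> carrier_mat n n"
    and UtU: "U\<^sup>T * U = 1\<^sub>m n" and UUt: "U * U\<^sup>T = 1\<^sub>m n" and Hd: "H = U * mat_diag n d * U\<^sup>T"
    and ev: "\<And>j. j < n \<Longrightarrow> H *\<^sub>v col U j = d j \<cdot>\<^sub>v col U j" by auto
  have dpos: "d j > 0" if j: "j < n" for j
  proof -
    have c: "col U j \<in> carrier_vec n" using U j by auto
    have "col U j \<noteq> 0\<^sub>v n" using orthogonal_col_eigenvalue(1)[OF U UtU j ev[OF j]] c by auto
    hence "col U j \<bullet> (H *\<^sub>v col U j) > 0" using Hpd c unfolding pos_def_mat_def by auto
    thus ?thesis unfolding orthogonal_col_eigenvalue(2)[OF U UtU j ev[OF j]] .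
  qed
  define R0 where "R0 = U * mat_diag n (\<lambda>j. sqrt (d j)) * U\<^sup>T"
  define Y0 where "Y0 = U * mat_diag n (\<lambda>j. 1 / sqrt (d j)) * U\<^sup>T"
  have R0: "R0 \<in> carrier_mat n n" and Y0: "Y0 \<in> carrier_mat n n" unfolding R0_def Y0_def using U by auto
  have R0t: "R0\<^sup>T = R0" unfolding R0_def by (rule orthogonal_conj_symmetric[OF U])
  have Y0t: "Y0\<^sup>T = Y0" unfolding Y0_def by (rule orthogonal_conj_symmetric[OF U])
  have R0R0: "R0 * R0 = H" unfolding R0_def orthogonal_conj_mult[OF U UtU] Hd
    by (rule arg_cong[of _ _ "\<lambda>D. U * D * U\<^sup>T"], rule mat_diag_cong, insert dpos, simp add: less_imp_le)
  have R0pd: "pos_def_mat n R0" unfolding R0_def by (rule orthogonal_conj_pos_def[OF U UUt], insert dpos, simp)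
  have inverse: "U * mat_diag n (\<lambda>i. f i * g i) * U\<^sup>T = 1\<^sub>m n"
    if "\<And>i. i < n \<Longrightarrow> f i * g i = 1" for f g
  proof -
    have "mat_diag n (\<lambda>i. f i * g i) = 1\<^sub>m n" unfolding mat_diag_one[symmetric]
      by (rule mat_diag_cong) (rule that)
    thus ?thesis using U UUt by simp
  qed
  have sqrt_d: "sqrt (d i) * (1 / sqrt (d i)) = 1" "1 / sqrt (d i) * sqrt (d i) = 1" if "i < n" for i
    using dpos[OF that] by simp_all
  have R0Y0: "R0 * Y0 = 1\<^sub>m n" unfolding R0_def Y0_def orthogonal_conj_mult[OF U UtU]
    by (rule inverse) (rule sqrt_d)
  have Y0R0: "Y0 * R0 = 1\<^sub>m n" unfolding R0_def Y0_def orthogonal_conj_mult[OF U UtU]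
    by (rule inverse) (rule sqrt_d)
  have dr: "dim_row H = n" using H by simp
  have "R = R0" unfolding R_def spd_sqrt_def dr
  proof (rule the1_equality)
    show "\<exists>!R. R\<^sup>T = R \<and> pos_def_mat n R \<and> R * R = H"
    proof (rule ex1I[of _ R0])
      fix Z assume "Z\<^sup>T = Z \<and> pos_def_mat n Z \<and> Z * Z = H"
      thus "Z = R0" using spd_square_root_unique[of n Z R0] R0t R0pd R0R0 by auto
    qed (insert R0t R0pd R0R0, auto)
  qed (insert R0t R0pd R0R0, auto)
  moreover have "Y = Y0" unfolding Y_def R_def[symmetric] \<open>R = R0\<close> by (rule inv_mat_eqI[OF R0 Y0 R0Y0 Y0R0])
  ultimately show ?thesis using R0 Y0 R0t Y0t R0R0 Y0R0 by simp
qed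

definition penrose_conditions :: "real mat \<Rightarrow> real mat \<Rightarrow> bool" where
  "penrose_conditions M X \<longleftrightarrow> X \<in> carrier_mat (dim_col M) (dim_row M) \<and>
     M * X * M = M \<and> X * M * X = X \<and> (M * X)\<^sup>T = M * X \<and> (X * M)\<^sup>T = X * M"

lemma penrose_conditions_unique:
  fixes M X Y :: "real mat"
  assumes M: "M \<in> carrier_mat n n" and X: "penrose_conditions M X" and Y: "penrose_conditions M Y"
  shows "X = Y"
proof -
  have Xc: "X \<in> carrier_mat n n" and Yc: "Y \<in> carrier_mat n n"
    using X Y M unfolding penrose_conditions_def by auto
  have X1: "M * X * M = M" and X2: "X * M * X = X" and X3: "(M * X)\<^sup>T = M * X" and X4: "(X * M)\<^sup>T = X * M"
    using X unfolding penrose_conditions_def by auto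
  have Y1: "M * Y * M = M" and Y2: "Y * M * Y = Y" and Y3: "(M * Y)\<^sup>T = M * Y" and Y4: "(Y * M)\<^sup>T = Y * M"
    using Y unfolding penrose_conditions_def by auto
  have Mt: "M\<^sup>T \<in> carrier_mat n n" and Xt: "X\<^sup>T \<in> carrier_mat n n" and Yt: "Y\<^sup>T \<in> carrier_mat n n"
    using M Xc Yc by auto
  note A = assoc_mult_mat[of _ n n _ n _ n]
  have MX: "M * X \<in> carrier_mat n n" and MY: "M * Y \<in> carrier_mat n n" and XM: "X * M \<in> carrier_mat n n"
    and YM: "Y * M \<in> carrier_mat n n" using M Xc Yc by auto
  have MtMY: "M\<^sup>T = M\<^sup>T * (M * Y)"
  proof -
    have "M\<^sup>T = (M * Y * M)\<^sup>T" using Y1 by simp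
    also have "\<dots> = M\<^sup>T * (M * Y)\<^sup>T" by (rule transpose_mult[OF MY M])
    finally show ?thesis unfolding Y3 .
  qed
  have XtMt: "X\<^sup>T * M\<^sup>T = M * X" using transpose_mult[OF M Xc] X3 by simp
  have "X = X * (M * X)" using X2 M Xc by (simp add: A)
  also have "\<dots> = X * (X\<^sup>T * M\<^sup>T)" unfolding XtMt ..
  also have "\<dots> = X * (X\<^sup>T * (M\<^sup>T * (M * Y)))" using MtMY by simp
  also have "X\<^sup>T * (M\<^sup>T * (M * Y)) = (X\<^sup>T * M\<^sup>T) * (M * Y)" by (rule A[symmetric], insert Xt Mt MY, auto)
  also have "\<dots> = M * X * (M * Y)" unfolding XtMt ..
  also have "\<dots> = M * X * M * Y" by (rule A[symmetric], insert MX M Yc, auto)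
  also have "\<dots> = M * Y" unfolding X1 ..
  finally have XMY: "X = X * (M * Y)" .
  have MtXM: "M\<^sup>T = X * M * M\<^sup>T"
  proof -
    have "M\<^sup>T = (M * (X * M))\<^sup>T" using X1 M Xc by (simp add: A)
    also have "\<dots> = (X * M)\<^sup>T * M\<^sup>T" by (rule transpose_mult[OF M XM])
    finally show ?thesis unfolding X4 .
  qed
  have MtYt: "M\<^sup>T * Y\<^sup>T = Y * M" using transpose_mult[OF Yc M] Y4 by simp
  have "Y = (Y * M) * Y" using Y2 by simp
  also have "\<dots> = (M\<^sup>T * Y\<^sup>T) * Y" unfolding MtYt ..
  also have "\<dots> = ((X * M * M\<^sup>T) * Y\<^sup>T) * Y" using MtXM by simp
  also have "(X * M * M\<^sup>T) * Y\<^sup>T = (X * M) * (M\<^sup>T * Y\<^sup>T)" by (rule A, insert XM Mt Yt, auto)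
  also have "\<dots> = (X * M) * (Y * M)" unfolding MtYt ..
  also have "(X * M) * (Y * M) * Y = X * (M * (Y * M * Y))" using Xc M Yc by (simp add: A)
  also have "\<dots> = X * (M * Y)" unfolding Y2 ..
  finally have "Y = X * (M * Y)" .
  with XMY show ?thesis by simp
qed

lemma gram_mult_vec_eq_zeroD:
  fixes M :: "real mat"
  assumes M: "M \<in> carrier_mat n n" and u: "u \<in> carrier_vec n" and Gu: "(M\<^sup>T * M) *\<^sub>v u = 0\<^sub>v n"
  shows "M *\<^sub>v u = 0\<^sub>v n"
proof -
  have Mu: "M *\<^sub>v u \<in> carrier_vec n" using M u by auto
  have "(M *\<^sub>v u) \<bullet> (M *\<^sub>v u) = (M\<^sup>T *\<^sub>v (M *\<^sub>v u)) \<bullet> u"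
    by (rule transpose_vec_mult_scalar[OF M u Mu, symmetric])
  also have "M\<^sup>T *\<^sub>v (M *\<^sub>v u) = (M\<^sup>T * M) *\<^sub>v u" using M u by (simp add: assoc_mult_mat_vec)
  finally have "(M *\<^sub>v u) \<bullet> (M *\<^sub>v u) = 0" using Gu u by simp
  thus ?thesis by (rule scalar_prod_self_eq_zeroD[OF Mu])
qed

lemma mult_gram_eigenvectors_zero:
  fixes M U :: "real mat"
  assumes M: "M \<in> carrier_mat n n" and U: "U \<in> carrier_mat n n"
    and ev: "\<And>j. j < n \<Longrightarrow> (M\<^sup>T * M) *\<^sub>v col U j = d j \<cdot>\<^sub>v col U j"
    and f: "\<And>j. j < n \<Longrightarrow> d j \<noteq> 0 \<Longrightarrow> f j = 0"
  shows "M * U * mat_diag n f = 0\<^sub>m n n"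
proof (rule eq_matI)
  fix a j assume "a < dim_row (0\<^sub>m n n :: real mat)" "j < dim_col (0\<^sub>m n n :: real mat)"
  hence a: "a < n" and j: "j < n" by auto
  have MU: "M * U \<in> carrier_mat n n" using M U by auto
  have "(M * U * mat_diag n f) $$ (a,j) = (M *\<^sub>v col U j) $ a * f j"
    unfolding mat_diag_mult_right[OF MU] using M U a j by simp
  also have "\<dots> = 0"
  proof (cases "d j = 0")
    case False thus ?thesis using f[OF j] by simp
  next
    case True
    have u: "col U j \<in> carrier_vec n" using U j by auto
    have "(M\<^sup>T * M) *\<^sub>v col U j = 0\<^sub>v n" unfolding ev[OF j] True using U j by (intro eq_vecI) auto
    hence "M *\<^sub>v col U j = 0\<^sub>v n" by (rule gram_mult_vec_eq_zeroD[OF M u])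
    thus ?thesis using a by simp
  qed
  finally show "(M * U * mat_diag n f) $$ (a,j) = 0\<^sub>m n n $$ (a,j)" using a j by simp
qed (insert M U, auto)

text \<open>With M^T M = U diag(d) U^T, the pseudo-inverse is U diag(d^+) U^T M^T, where d^+ inverts the
  nonzero entries of d; then X M = U diag(e) U^T with e the indicator of d /= 0, and M vanishes on
  the eigenvectors with d = 0.\<close>
lemma penrose_conditions_exist:
  fixes M :: "real mat"
  assumes M: "M \<in> carrier_mat n n"
  shows "\<exists>X. penrose_conditions M X"
proof -
  define G where "G = M\<^sup>T * M"
  have Mt: "M\<^sup>T \<in> carrier_mat n n" using M by auto
  have G: "G \<in> carrier_mat n n" unfolding G_def using M by auto
  have Gt: "G\<^sup>T = G" unfolding G_def using transpose_mult[OF Mt M] by simp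
  from real_symmetric_diagonalization[OF G Gt] obtain U d where U: "U \<in> carrier_mat n n"
    and UtU: "U\<^sup>T * U = 1\<^sub>m n" and UUt: "U * U\<^sup>T = 1\<^sub>m n" and Gd: "G = U * mat_diag n d * U\<^sup>T"
    and ev: "\<And>j. j < n \<Longrightarrow> G *\<^sub>v col U j = d j \<cdot>\<^sub>v col U j" by auto
  note A = assoc_mult_mat[of _ n n _ n _ n]
  define e where "e j = (if d j = 0 then 0 else (1::real))" for j
  define p where "p j = (if d j = 0 then 0 else 1 / d j)" for j
  define Pi where "Pi = U * mat_diag n e * U\<^sup>T"
  define Pd where "Pd = U * mat_diag n p * U\<^sup>T"
  have Pi: "Pi \<in> carrier_mat n n" and Pd: "Pd \<in> carrier_mat n n" unfolding Pi_def Pd_def using U by auto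
  define X where "X = Pd * M\<^sup>T"
  have Xc: "X \<in> carrier_mat n n" unfolding X_def using Pd M by auto
  have XM: "X * M = Pi"
  proof -
    have "X * M = Pd * G" unfolding X_def G_def by (rule A[OF Pd Mt M])
    also have "\<dots> = U * mat_diag n (\<lambda>i. p i * d i) * U\<^sup>T"
      unfolding Pd_def Gd by (rule orthogonal_conj_mult[OF U UtU])
    also have "mat_diag n (\<lambda>i. p i * d i) = mat_diag n e" unfolding p_def e_def by (rule mat_diag_cong) auto
    finally show ?thesis unfolding Pi_def .
  qed
  have MPi: "M * Pi = M"
  proof -
    have kernel: "M * U * mat_diag n (\<lambda>j. 1 - e j) = 0\<^sub>m n n"
      by (rule mult_gram_eigenvectors_zero[OF M U ev[unfolded G_def]]) (auto simp: e_def)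
    have "Pi + U * mat_diag n (\<lambda>j. 1 - e j) * U\<^sup>T = 1\<^sub>m n"
      unfolding Pi_def orthogonal_conj_add[OF U] using U UUt by (simp add: mat_diag_one)
    hence "M = M * (Pi + U * mat_diag n (\<lambda>j. 1 - e j) * U\<^sup>T)" using M by simp
    also have "\<dots> = M * Pi + M * (U * mat_diag n (\<lambda>j. 1 - e j) * U\<^sup>T)"
      by (rule mult_add_distrib_mat[OF M Pi], insert U, auto)
    also have "M * (U * mat_diag n (\<lambda>j. 1 - e j) * U\<^sup>T) = M * U * mat_diag n (\<lambda>j. 1 - e j) * U\<^sup>T"
      using M U by (simp add: A)
    also have "\<dots> = 0\<^sub>m n n" unfolding kernel using U by simp
    also have "M * Pi + 0\<^sub>m n n = M * Pi" using M Pi by simp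
    finally show ?thesis by (rule sym)
  qed
  have "M * X * M = M" using MPi XM by (simp add: A[OF M Xc M])
  moreover have "X * M * X = X"
  proof -
    have "X * M * X = Pi * X" unfolding XM ..
    also have "\<dots> = (Pi * Pd) * M\<^sup>T" unfolding X_def by (rule A[symmetric, OF Pi Pd Mt])
    also have "Pi * Pd = U * mat_diag n (\<lambda>i. e i * p i) * U\<^sup>T"
      unfolding Pi_def Pd_def by (rule orthogonal_conj_mult[OF U UtU])
    also have "mat_diag n (\<lambda>i. e i * p i) = mat_diag n p" unfolding e_def p_def by (rule mat_diag_cong) auto
    finally show ?thesis unfolding Pd_def[symmetric] X_def .
  qed
  moreover have "(M * X)\<^sup>T = M * X"
  proof -
    have "M * X = M * Pd * M\<^sup>T" unfolding X_def by (rule A[symmetric, OF M Pd Mt])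
    thus ?thesis using congruence_symmetric[OF M Pd orthogonal_conj_symmetric[OF U, of p, folded Pd_def]]
      by simp
  qed
  moreover have "(X * M)\<^sup>T = X * M" unfolding XM Pi_def by (rule orthogonal_conj_symmetric[OF U])
  ultimately show ?thesis unfolding penrose_conditions_def using Xc M by (intro exI[of _ X]) auto
qed

lemma mp_inverse_penrose_conditions:
  fixes M :: "real mat"
  assumes M: "M \<in> carrier_mat n n"
  shows "penrose_conditions M (mp_inverse M)"
proof -
  from penrose_conditions_exist[OF M] obtain X where X: "penrose_conditions M X" by auto
  have "\<exists>!X. penrose_conditions M X" using X penrose_conditions_unique[OF M] by blast
  hence "penrose_conditions M (THE X. penrose_conditions M X)" by (rule theI')
  moreover have "mp_inverse M = (THE X. penrose_conditions M X)"
    unfolding mp_inverse_def penrose_conditions_def ..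
  ultimately show ?thesis by simp
qed

section \<open>The preconditioned saddle-point iteration\<close>

lemma four_block_zero_mult_vec:
  fixes G B G1 :: "'a :: comm_ring_1 mat"
  assumes G: "G \<in> carrier_mat n n" and B: "B \<in> carrier_mat m n" and B1: "B1 \<in> carrier_mat n m"
    and x: "x \<in> carrier_vec n" and y: "y \<in> carrier_vec m"
  shows "four_block_mat G B1 B (0\<^sub>m m m) *\<^sub>v (x @\<^sub>v y) = (G *\<^sub>v x + B1 *\<^sub>v y) @\<^sub>v (B *\<^sub>v x)"
proof -
  have "four_block_mat G B1 B (0\<^sub>m m m) *\<^sub>v (x @\<^sub>v y) = (G *\<^sub>v x + B1 *\<^sub>v y) @\<^sub>v (B *\<^sub>v x + 0\<^sub>m m m *\<^sub>v y)"
    by (rule four_block_mat_mult_vec[OF G B1 B _ x y], simp)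
  also have "B *\<^sub>v x + 0\<^sub>m m m *\<^sub>v y = B *\<^sub>v x" using B x y by (intro eq_vecI) (auto simp: scalar_prod_def)
  finally show ?thesis .
qed

lemma zero_append_vec: "0\<^sub>v n @\<^sub>v 0\<^sub>v m = (0\<^sub>v (n+m) :: 'a :: zero vec)"
  by (intro eq_vecI) auto

lemma saddle_kernel_subset:
  fixes G G' B B1 :: "real mat"
  assumes G: "pos_def_mat n G" and G': "G' \<in> carrier_mat n n" and B: "B \<in> carrier_mat m n"
    and B1: "B1 \<in> carrier_mat n m"
    and BB: "\<And>x y. x \<in> carrier_vec n \<Longrightarrow> y \<in> carrier_vec m \<Longrightarrow> B *\<^sub>v x = 0\<^sub>v m \<Longrightarrow> x \<bullet> (B1 *\<^sub>v y) = 0"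
    and v: "v \<in> carrier_vec (n+m)"
    and eq: "four_block_mat G B1 B (0\<^sub>m m m) *\<^sub>v v = 0\<^sub>v (n+m)"
  shows "four_block_mat G' B1 B (0\<^sub>m m m) *\<^sub>v v = 0\<^sub>v (n+m)"
proof -
  have Gc: "G \<in> carrier_mat n n" using G unfolding pos_def_mat_def by auto
  define x where "x = vec_first v n"
  define y where "y = vec_last v m"
  have x: "x \<in> carrier_vec n" and y: "y \<in> carrier_vec m" unfolding x_def y_def by auto
  have vxy: "v = x @\<^sub>v y" unfolding x_def y_def using v by simp
  have Gx: "G *\<^sub>v x \<in> carrier_vec n" and B1y: "B1 *\<^sub>v y \<in> carrier_vec n" using Gc B1 x y by auto
  from eq[unfolded vxy four_block_zero_mult_vec[OF Gc B B1 x y]]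
  have "(G *\<^sub>v x + B1 *\<^sub>v y) @\<^sub>v (B *\<^sub>v x) = 0\<^sub>v n @\<^sub>v 0\<^sub>v m" unfolding zero_append_vec .
  hence e1: "G *\<^sub>v x + B1 *\<^sub>v y = 0\<^sub>v n" and e2: "B *\<^sub>v x = 0\<^sub>v m"
    using append_vec_eq[of "G *\<^sub>v x + B1 *\<^sub>v y" n "0\<^sub>v n"] Gx B1y by auto
  have "x \<bullet> (G *\<^sub>v x + B1 *\<^sub>v y) = 0" unfolding e1 using x by simp
  hence "x \<bullet> (G *\<^sub>v x) + x \<bullet> (B1 *\<^sub>v y) = 0" using x Gx B1y by (simp add: scalar_prod_add_distrib)
  hence "x \<bullet> (G *\<^sub>v x) = 0" using BB[OF x y e2] by simp
  hence x0: "x = 0\<^sub>v n" using G x unfolding pos_def_mat_def by force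
  have "B1 *\<^sub>v y = 0\<^sub>v n" using e1 unfolding x0 using Gc B1y by (simp add: mult_mat_vec_zero)
  thus ?thesis unfolding vxy x0 using four_block_zero_mult_vec[OF G' B B1 _ y, of "0\<^sub>v n"] G' B
    by (simp add: mult_mat_vec_zero zero_append_vec)
qed

lemma rotation_fixed_vec_zero:
  fixes u v :: "real vec"
  assumes u: "u \<in> carrier_vec k" and v: "v \<in> carrier_vec k"
    and e1: "u = \<alpha> \<cdot>\<^sub>v u - \<beta> \<cdot>\<^sub>v v" and e2: "v = \<beta> \<cdot>\<^sub>v u + \<alpha> \<cdot>\<^sub>v v"
    and ab: "\<alpha> \<noteq> 1 \<or> \<beta> \<noteq> 0"
  shows "u = 0\<^sub>v k \<and> v = 0\<^sub>v k"
proof -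
  have nz: "(1-\<alpha>)^2 + \<beta>^2 \<noteq> 0"
  proof
    assume "(1-\<alpha>)^2 + \<beta>^2 = 0"
    hence "(1-\<alpha>)^2 = 0 \<and> \<beta>^2 = 0" using zero_le_power2[of "1-\<alpha>"] zero_le_power2[of \<beta>] by linarith
    thus False using ab by simp
  qed
  have "u $ i = 0 \<and> v $ i = 0" if i: "i < k" for i
  proof -
    have a: "u $ i = \<alpha> * u $ i - \<beta> * v $ i" using arg_cong[OF e1, of "\<lambda>w. w $ i"] i u v by simp
    have b: "v $ i = \<beta> * u $ i + \<alpha> * v $ i" using arg_cong[OF e2, of "\<lambda>w. w $ i"] i u v by simp
    have "((1-\<alpha>)^2 + \<beta>^2) * u $ i = (1-\<alpha>) * ((1-\<alpha>) * u $ i + \<beta> * v $ i) - \<beta> * ((1-\<alpha>) * v $ i - \<beta> * u $ i)"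
      by (simp add: algebra_simps power2_eq_square)
    also have "\<dots> = 0" using a b by (simp add: algebra_simps)
    finally have ui: "u $ i = 0" using nz by (simp only: mult_eq_0_iff) simp
    have "((1-\<alpha>)^2 + \<beta>^2) * v $ i = (1-\<alpha>) * ((1-\<alpha>) * v $ i - \<beta> * u $ i) + \<beta> * ((1-\<alpha>) * u $ i + \<beta> * v $ i)"
      by (simp add: algebra_simps power2_eq_square)
    also have "\<dots> = 0" using a b by (simp add: algebra_simps)
    finally have "v $ i = 0" using nz by (simp only: mult_eq_0_iff) simp
    with ui show ?thesis by simp
  qed
  thus ?thesis using u v by (auto intro!: eq_vecI)
qed

lemma smult_append_vec:
  fixes a b c d :: "'a :: comm_ring_1 vec"
  assumes a: "a \<in> carrier_vec k" and c: "c \<in> carrier_vec k" and b: "b \<in> carrier_vec l" and d: "d \<in> carrier_vec l"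
  shows "x \<cdot>\<^sub>v (a @\<^sub>v b) - y \<cdot>\<^sub>v (c @\<^sub>v d) = (x \<cdot>\<^sub>v a - y \<cdot>\<^sub>v c) @\<^sub>v (x \<cdot>\<^sub>v b - y \<cdot>\<^sub>v d)"
    and "x \<cdot>\<^sub>v (a @\<^sub>v b) + y \<cdot>\<^sub>v (c @\<^sub>v d) = (x \<cdot>\<^sub>v a + y \<cdot>\<^sub>v c) @\<^sub>v (x \<cdot>\<^sub>v b + y \<cdot>\<^sub>v d)"
  by (rule eq_vecI, insert a b c d, auto)+

lemma scalar_prod_lincomb:
  fixes x a b :: "real vec"
  assumes "x \<in> carrier_vec k" "a \<in> carrier_vec k" "b \<in> carrier_vec k"
  shows "x \<bullet> (\<alpha> \<cdot>\<^sub>v a - \<beta> \<cdot>\<^sub>v b) = \<alpha> * (x \<bullet> a) - \<beta> * (x \<bullet> b)"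
    and "x \<bullet> (\<alpha> \<cdot>\<^sub>v a + \<beta> \<cdot>\<^sub>v b) = \<alpha> * (x \<bullet> a) + \<beta> * (x \<bullet> b)"
  using assms by (simp_all add: scalar_prod_def sum.distrib sum_subtractf sum_distrib_left algebra_simps)

lemma smult_vec_cancel_left:
  fixes a b :: "complex vec"
  assumes "l \<noteq> 0" "a \<in> carrier_vec k" "b \<in> carrier_vec k" "l \<cdot>\<^sub>v a = l \<cdot>\<^sub>v b"
  shows "a = b"
proof (rule eq_vecI)
  fix i assume "i < dim_vec b" hence i: "i < k" using assms by simp
  have "(l \<cdot>\<^sub>v a) $ i = (l \<cdot>\<^sub>v b) $ i" by (simp only: assms(4))
  hence "l * a $ i = l * b $ i" using i assms(2,3) by simp
  thus "a $ i = b $ i" using assms(1) by simp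
qed (insert assms, auto)

lemma Re_Im_of_mult_mat_vec_eq_smult:
  fixes A M :: "real mat"
  assumes A: "A \<in> carrier_mat n n" and M: "M \<in> carrier_mat n n" and z: "z \<in> carrier_vec n"
    and eq: "cmat A *\<^sub>v z = c \<cdot>\<^sub>v (cmat M *\<^sub>v z)"
  shows "A *\<^sub>v map_vec Re z = Re c \<cdot>\<^sub>v (M *\<^sub>v map_vec Re z) - Im c \<cdot>\<^sub>v (M *\<^sub>v map_vec Im z)"
    and "A *\<^sub>v map_vec Im z = Im c \<cdot>\<^sub>v (M *\<^sub>v map_vec Re z) + Re c \<cdot>\<^sub>v (M *\<^sub>v map_vec Im z)"
  using arg_cong[OF eq, of "map_vec Re"] arg_cong[OF eq, of "map_vec Im"]
  unfolding map_vec_Re_Im_mult_mat_vec[OF A z] map_vec_Re_Im_smult_vec map_vec_Re_Im_mult_mat_vec[OF M z]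
  by simp_all

lemma modulus_shift_less_1:
  fixes \<alpha> \<beta> \<omega> \<rho> :: real
  assumes a\<omega>: "\<alpha> * \<omega> = 1" and b\<omega>: "(\<beta> * \<omega>)^2 \<le> \<rho>^2" and \<omega>: "1 + \<rho>^2 < 2 * \<omega>" "\<omega> > 0"
  shows "(1 - \<alpha>)^2 + \<beta>^2 < 1"
proof -
  have "((1 - \<alpha>)^2 + \<beta>^2) * \<omega>^2 = (\<omega> - \<alpha> * \<omega>)^2 + (\<beta> * \<omega>)^2"
    by (simp add: power2_eq_square algebra_simps)
  also have "\<dots> = (\<omega> - 1)^2 + (\<beta> * \<omega>)^2" unfolding a\<omega> ..
  also have "\<dots> \<le> (\<omega> - 1)^2 + \<rho>^2" using b\<omega> by simp
  also have "\<dots> < 1 * \<omega>^2" using \<omega>(1) by (simp add: power2_eq_square algebra_simps)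
  finally show ?thesis using \<omega>(2) by (simp only: mult_less_cancel_right_pos zero_less_power2)
qed

text \<open>The hypothesis n > 0 replaces the rank condition of the theorem, which is used only to
  exclude m = 0; the argument works for every B.\<close>
locale saddle_point_iteration =
  fixes n m :: nat and W B :: "real mat" and \<omega> :: real
  assumes W: "pos_def_mat n W" and B: "B \<in> carrier_mat m n" and \<omega>0: "\<omega> > 0" and n0: "n > 0"
begin

abbreviation "H \<equiv> (1/2) \<cdot>\<^sub>m (W + W\<^sup>T)"
abbreviation "S \<equiv> (1/2) \<cdot>\<^sub>m (W - W\<^sup>T)"
abbreviation "P \<equiv> \<omega> \<cdot>\<^sub>m H"
abbreviation "K \<equiv> inv_mat (spd_sqrt H) * S * inv_mat (spd_sqrt H)"
abbreviation "A \<equiv> four_block_mat W B\<^sup>T (- B) (0\<^sub>m m m)"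
abbreviation "M \<equiv> four_block_mat P B\<^sup>T (- B) (0\<^sub>m m m)"
abbreviation "N \<equiv> n + m"
abbreviation "X \<equiv> mp_inverse M"
abbreviation "Q \<equiv> X * M"
abbreviation "T \<equiv> 1\<^sub>m N - X * A"

lemma W_carrier: "W \<in> carrier_mat n n" using W unfolding pos_def_mat_def by auto
lemma W_B_dims[simp]: "dim_row W = n" "dim_col W = n" "dim_row B = m" "dim_col B = n" using W_carrier B by auto
lemma H_carrier: "H \<in> carrier_mat n n" using W_carrier by auto
lemma S_carrier: "S \<in> carrier_mat n n" using W_carrier by auto
lemma P_carrier: "P \<in> carrier_mat n n" using W_carrier by auto
lemma H_symmetric: "H\<^sup>T = H" using W_carrier by (intro eq_matI) auto
lemma S_skew: "S\<^sup>T = - S" using W_carrier by (intro eq_matI) (auto simp: field_simps)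
lemma P_symmetric: "P\<^sup>T = P" using W_carrier by (intro eq_matI) auto

lemma mult_vec_carrier_n[simp]:
  assumes "x \<in> carrier_vec n"
  shows "W *\<^sub>v x \<in> carrier_vec n" "H *\<^sub>v x \<in> carrier_vec n" "P *\<^sub>v x \<in> carrier_vec n"
    "B *\<^sub>v x \<in> carrier_vec m" "(- B) *\<^sub>v x \<in> carrier_vec m"
  using mult_mat_vec_carrier[OF W_carrier assms] mult_mat_vec_carrier[OF H_carrier assms] mult_mat_vec_carrier[OF P_carrier assms]
    mult_mat_vec_carrier[OF B assms] mult_mat_vec_carrier[OF uminus_carrier_mat[OF B] assms] by blast+

lemma mult_vec_carrier_m[simp]: "y \<in> carrier_vec m \<Longrightarrow> B\<^sup>T *\<^sub>v y \<in> carrier_vec n"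
  using mult_mat_vec_carrier[OF transpose_carrier_mat[THEN iffD2, OF B]] by blast

lemma H_mult_vec: "x \<in> carrier_vec n \<Longrightarrow> H *\<^sub>v x = (1/2) \<cdot>\<^sub>v (W *\<^sub>v x + W\<^sup>T *\<^sub>v x)"
  using W_carrier by (simp add: smult_mat_mult_vec[of _ n n] add_mult_distrib_mat_vec)

lemma S_mult_vec:
  assumes x: "x \<in> carrier_vec n"
  shows "S *\<^sub>v x = (1/2) \<cdot>\<^sub>v (W *\<^sub>v x - W\<^sup>T *\<^sub>v x)"
proof -
  have Wt: "W\<^sup>T \<in> carrier_mat n n" using W_carrier by simp
  have "S *\<^sub>v x = (1/2) \<cdot>\<^sub>v ((W - W\<^sup>T) *\<^sub>v x)" by (rule smult_mat_mult_vec[OF minus_carrier_mat[OF Wt] x])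
  also have "(W - W\<^sup>T) *\<^sub>v x = W *\<^sub>v x - W\<^sup>T *\<^sub>v x" by (rule minus_mult_distrib_mat_vec[OF W_carrier Wt x])
  finally show ?thesis .
qed

lemma quadratic_form_H: "x \<in> carrier_vec n \<Longrightarrow> x \<bullet> (H *\<^sub>v x) = x \<bullet> (W *\<^sub>v x)"
  using scalar_prod_transpose_mult_vec[OF W_carrier, of x x] W_carrier
  by (simp add: H_mult_vec scalar_prod_add_distrib[of _ n])

lemma quadratic_form_P: "x \<in> carrier_vec n \<Longrightarrow> x \<bullet> (P *\<^sub>v x) = \<omega> * (x \<bullet> (H *\<^sub>v x))"
  using W_carrier by (simp add: smult_mat_mult_vec[of _ n n])

lemma bilinear_form_S:
  "p \<in> carrier_vec n \<Longrightarrow> q \<in> carrier_vec n \<Longrightarrow> 2 * (p \<bullet> (S *\<^sub>v q)) = p \<bullet> (W *\<^sub>v q) - q \<bullet> (W *\<^sub>v p)"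
  using scalar_prod_transpose_mult_vec[OF W_carrier, of p q] W_carrier
  by (simp add: S_mult_vec scalar_prod_minus_distrib[of _ n])

lemma bilinear_form_P: "p \<in> carrier_vec n \<Longrightarrow> q \<in> carrier_vec n \<Longrightarrow> p \<bullet> (P *\<^sub>v q) = q \<bullet> (P *\<^sub>v p)"
  using scalar_prod_transpose_mult_vec[OF P_carrier, of p q] unfolding P_symmetric by simp

lemma H_pos_def: "pos_def_mat n H"
  using H_carrier quadratic_form_H W unfolding pos_def_mat_def by auto

lemma P_pos_def: "pos_def_mat n P"
  using P_carrier quadratic_form_P H_pos_def \<omega>0 unfolding pos_def_mat_def by auto

lemma K_carrier_skew: "K \<in> carrier_mat n n" "K\<^sup>T = - K"
proof -
  define Y where "Y = inv_mat (spd_sqrt H)"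
  from spd_sqrt_inv_mat[OF H_carrier H_symmetric H_pos_def] have Y: "Y \<in> carrier_mat n n" and Yt: "Y\<^sup>T = Y"
    unfolding Y_def by auto
  show "K \<in> carrier_mat n n" unfolding Y_def[symmetric] using Y S_carrier by auto
  have "K\<^sup>T = Y\<^sup>T * (Y * S)\<^sup>T" unfolding Y_def[symmetric]
    by (rule transpose_mult[of "Y * S" n n Y n], insert Y S_carrier, auto)
  also have "(Y * S)\<^sup>T = S\<^sup>T * Y\<^sup>T" by (rule transpose_mult[OF Y S_carrier])
  finally have "K\<^sup>T = Y * (- S * Y)" unfolding S_skew Yt .
  also have "- S * Y = - (S * Y)" by (rule uminus_mult_left_mat, insert S_carrier Y, auto)
  also have "Y * - (S * Y) = - (Y * (S * Y))" by (rule uminus_mult_right_mat, insert S_carrier Y, auto)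
  also have "Y * (S * Y) = Y * S * Y" by (rule assoc_mult_mat[symmetric], insert S_carrier Y, auto)
  finally show "K\<^sup>T = - K" unfolding Y_def .
qed

text \<open>With p = R^-1 u and q = R^-1 w for R = H^(1/2), the skew form p.S q equals u.K w, and K is
  skew-symmetric; so the norm bound and 4 |u|^2 |w|^2 <= (|u|^2 + |w|^2)^2 apply.\<close>
lemma skew_form_bound:
  assumes p: "p \<in> carrier_vec n" and q: "q \<in> carrier_vec n"
  shows "(2 * (p \<bullet> (S *\<^sub>v q)))^2 \<le> (spectral_radius (cmat K))^2 * (p \<bullet> (H *\<^sub>v p) + q \<bullet> (H *\<^sub>v q))^2"
proof -
  define R where "R = spd_sqrt H"
  define Y where "Y = inv_mat R"
  from spd_sqrt_inv_mat[OF H_carrier H_symmetric H_pos_def] have R: "R \<in> carrier_mat n n" and Rt: "R\<^sup>T = R"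
    and RR: "R * R = H" and Y: "Y \<in> carrier_mat n n" and Yt: "Y\<^sup>T = Y" and YR: "Y * R = 1\<^sub>m n"
    unfolding R_def Y_def by auto
  define \<rho> where "\<rho> = spectral_radius (cmat K)"
  have KY: "K = Y * S * Y" unfolding Y_def R_def ..
  define u where "u = R *\<^sub>v p"
  define w where "w = R *\<^sub>v q"
  have u: "u \<in> carrier_vec n" and w: "w \<in> carrier_vec n" unfolding u_def w_def using R p q by auto
  have pu: "p = Y *\<^sub>v u" unfolding u_def using YR Y R p by (simp add: assoc_mult_mat_vec[symmetric, of _ n n])
  have qw: "q = Y *\<^sub>v w" unfolding w_def using YR Y R q by (simp add: assoc_mult_mat_vec[symmetric, of _ n n])
  have Hqf: "x \<bullet> (H *\<^sub>v x) = (R *\<^sub>v x) \<bullet> (R *\<^sub>v x)" if x: "x \<in> carrier_vec n" for x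
  proof -
    have Rx: "R *\<^sub>v x \<in> carrier_vec n" using R x by auto
    have "H *\<^sub>v x = R *\<^sub>v (R *\<^sub>v x)" unfolding RR[symmetric] using R x by (simp add: assoc_mult_mat_vec)
    moreover have "(R\<^sup>T *\<^sub>v x) \<bullet> (R *\<^sub>v x) = x \<bullet> (R *\<^sub>v (R *\<^sub>v x))" by (rule transpose_vec_mult_scalar[OF R Rx x])
    ultimately show ?thesis unfolding Rt by simp
  qed
  have Sb: "p \<bullet> (S *\<^sub>v q) = u \<bullet> (K *\<^sub>v w)"
  proof -
    have Sw: "S *\<^sub>v (Y *\<^sub>v w) \<in> carrier_vec n" using S_carrier Y w by auto
    have "p \<bullet> (S *\<^sub>v q) = (Y\<^sup>T *\<^sub>v u) \<bullet> (S *\<^sub>v (Y *\<^sub>v w))" unfolding pu qw Yt ..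
    also have "\<dots> = u \<bullet> (Y *\<^sub>v (S *\<^sub>v (Y *\<^sub>v w)))" by (rule transpose_vec_mult_scalar[OF Y Sw u])
    also have "Y *\<^sub>v (S *\<^sub>v (Y *\<^sub>v w)) = K *\<^sub>v w" unfolding KY using Y S_carrier w
      by (simp add: assoc_mult_mat_vec[of _ n n _ n])
    finally show ?thesis .
  qed
  have Kw: "K *\<^sub>v w \<in> carrier_vec n" using K_carrier_skew(1) w by auto
  have c1: "(u \<bullet> (K *\<^sub>v w))^2 \<le> (u \<bullet> u) * ((K *\<^sub>v w) \<bullet> (K *\<^sub>v w))" by (rule cauchy_schwarz_scalar_prod[OF u Kw])
  have c2: "(K *\<^sub>v w) \<bullet> (K *\<^sub>v w) \<le> \<rho>^2 * (w \<bullet> w)" unfolding \<rho>_def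
    by (rule sym_or_skew_mult_vec_bound[OF K_carrier_skew(1) n0 _ w], insert K_carrier_skew(2), simp)
  have uu: "u \<bullet> u \<ge> 0" by (rule scalar_prod_self_nonneg)
  have "(2 * (p \<bullet> (S *\<^sub>v q)))^2 = 4 * (u \<bullet> (K *\<^sub>v w))^2" unfolding Sb by (simp add: power2_eq_square)
  also have "\<dots> \<le> 4 * ((u \<bullet> u) * (\<rho>^2 * (w \<bullet> w)))"
    using c1 mult_left_mono[OF c2 uu] by simp
  also have "\<dots> = \<rho>^2 * (4 * (u \<bullet> u) * (w \<bullet> w))" by simp
  also have "\<dots> \<le> \<rho>^2 * ((u \<bullet> u) + (w \<bullet> w))^2"
  proof (rule mult_left_mono)
    have "0 \<le> ((u \<bullet> u) - (w \<bullet> w))^2" by simp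
    thus "4 * (u \<bullet> u) * (w \<bullet> w) \<le> ((u \<bullet> u) + (w \<bullet> w))^2" by (simp add: power2_eq_square algebra_simps)
  qed simp
  also have "(u \<bullet> u) + (w \<bullet> w) = p \<bullet> (H *\<^sub>v p) + q \<bullet> (H *\<^sub>v q)" unfolding Hqf[OF p] Hqf[OF q] u_def w_def ..
  finally show ?thesis unfolding \<rho>_def .
qed

lemma A_carrier: "A \<in> carrier_mat N N" using W_carrier B by auto
lemma M_carrier: "M \<in> carrier_mat N N" using P_carrier B by auto
lemma X_penrose: "penrose_conditions M X" by (rule mp_inverse_penrose_conditions[OF M_carrier])
lemma X_carrier: "X \<in> carrier_mat N N" using X_penrose M_carrier unfolding penrose_conditions_def by auto
lemma X_dims[simp]: "dim_row X = N" "dim_col X = N" using X_carrier by auto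
lemma MXM: "M * X * M = M" using X_penrose unfolding penrose_conditions_def by auto
lemma XMX: "X * M * X = X" using X_penrose unfolding penrose_conditions_def by auto
lemma MX_symmetric: "(M * X)\<^sup>T = M * X" using X_penrose unfolding penrose_conditions_def by auto
lemma Q_carrier: "Q \<in> carrier_mat N N" using X_carrier M_carrier by auto
lemma T_carrier: "T \<in> carrier_mat N N" using X_carrier A_carrier by auto

lemma orthogonal_range_transpose_B:
  "x \<in> carrier_vec n \<Longrightarrow> y \<in> carrier_vec m \<Longrightarrow> B *\<^sub>v x = 0\<^sub>v m \<Longrightarrow> x \<bullet> (B\<^sup>T *\<^sub>v y) = 0"
  using scalar_prod_transpose_mult_vec[OF B] by simp

lemma kernel_M_subset_kernel_A:
  assumes v: "v \<in> carrier_vec N" and e: "M *\<^sub>v v = 0\<^sub>v N"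
  shows "A *\<^sub>v v = 0\<^sub>v N"
proof (rule saddle_kernel_subset[OF P_pos_def W_carrier _ _ _ v e])
  fix x y :: "real vec" assume x: "x \<in> carrier_vec n" and y: "y \<in> carrier_vec m" and Bx: "(- B) *\<^sub>v x = 0\<^sub>v m"
  have "B *\<^sub>v x = 0\<^sub>v m" using Bx B x by (simp add: uminus_zero_vec_eq[of _ m])
  thus "x \<bullet> (B\<^sup>T *\<^sub>v y) = 0" by (rule orthogonal_range_transpose_B[OF x y])
qed (insert B, auto)

lemma kernel_M_transpose_subset_kernel_A_transpose:
  assumes v: "v \<in> carrier_vec N" and e: "M\<^sup>T *\<^sub>v v = 0\<^sub>v N"
  shows "A\<^sup>T *\<^sub>v v = 0\<^sub>v N"
proof -
  have Mt: "M\<^sup>T = four_block_mat P (- B\<^sup>T) B (0\<^sub>m m m)"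
    using transpose_four_block_mat[of P n n "B\<^sup>T" m "- B" m "0\<^sub>m m m"] P_carrier B P_symmetric
    by (simp add: transpose_uminus)
  have At: "A\<^sup>T = four_block_mat W\<^sup>T (- B\<^sup>T) B (0\<^sub>m m m)"
    using transpose_four_block_mat[of W n n "B\<^sup>T" m "- B" m "0\<^sub>m m m"] W_carrier B
    by (simp add: transpose_uminus)
  show ?thesis unfolding At
  proof (rule saddle_kernel_subset[OF P_pos_def _ B _ _ v e[unfolded Mt]])
    fix x y :: "real vec" assume x: "x \<in> carrier_vec n" and y: "y \<in> carrier_vec m" and Bx: "B *\<^sub>v x = 0\<^sub>v m"
    show "x \<bullet> ((- B\<^sup>T) *\<^sub>v y) = 0"
      using orthogonal_range_transpose_B[OF x y Bx] x y B by simp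
  qed (insert W_carrier B, auto)
qed

text \<open>M X is the orthogonal projection onto the range of M, which contains the range of A because
  the kernel of M^T lies in the kernel of A^T.\<close>
lemma MX_mult_A: "M * X * A = A"
proof (rule mat_eq_by_mult_vec[of _ N N])
  show "M * X * A \<in> carrier_mat N N" using M_carrier X_carrier A_carrier by auto
  show "A \<in> carrier_mat N N" by (rule A_carrier)
  fix w :: "real vec" assume w: "w \<in> carrier_vec N"
  have MX: "M * X \<in> carrier_mat N N" using M_carrier X_carrier by auto
  define u where "u = A *\<^sub>v w"
  have u: "u \<in> carrier_vec N" unfolding u_def using A_carrier w by auto
  define d where "d = u - (M * X) *\<^sub>v u"
  have MXu: "(M * X) *\<^sub>v u \<in> carrier_vec N" using MX u by auto
  have d: "d \<in> carrier_vec N" unfolding d_def using MXu u by auto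
  have MtMX: "M\<^sup>T * (M * X) = M\<^sup>T"
  proof -
    have "M\<^sup>T * (M * X) = M\<^sup>T * (M * X)\<^sup>T" unfolding MX_symmetric ..
    also have "\<dots> = ((M * X) * M)\<^sup>T" by (rule transpose_mult[symmetric, OF MX M_carrier])
    finally show ?thesis unfolding MXM .
  qed
  have "M\<^sup>T *\<^sub>v d = M\<^sup>T *\<^sub>v u - M\<^sup>T *\<^sub>v ((M * X) *\<^sub>v u)"
    unfolding d_def by (rule mult_minus_distrib_mat_vec, insert M_carrier u MXu, auto)
  also have "M\<^sup>T *\<^sub>v ((M * X) *\<^sub>v u) = (M\<^sup>T * (M * X)) *\<^sub>v u"
    by (rule assoc_mult_mat_vec[symmetric, of "M\<^sup>T" N N "M * X" N u], insert M_carrier MX u, auto)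
  finally have "M\<^sup>T *\<^sub>v d = 0\<^sub>v N" unfolding MtMX using M_carrier u by simp
  hence Atd: "A\<^sup>T *\<^sub>v d = 0\<^sub>v N" by (rule kernel_M_transpose_subset_kernel_A_transpose[OF d])
  have d1: "d \<bullet> ((M * X) *\<^sub>v u) = 0"
  proof -
    have "d \<bullet> ((M * X) *\<^sub>v u) = d \<bullet> (M *\<^sub>v (X *\<^sub>v u))"
      using M_carrier X_carrier u by (simp add: assoc_mult_mat_vec[of _ N N _ N])
    also have "\<dots> = (M\<^sup>T *\<^sub>v d) \<bullet> (X *\<^sub>v u)"
      by (rule transpose_vec_mult_scalar[OF M_carrier _ d, symmetric], insert X_carrier u, auto)
    also have "\<dots> = 0" using \<open>M\<^sup>T *\<^sub>v d = 0\<^sub>v N\<close> X_carrier u by simp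
    finally show ?thesis .
  qed
  have d2: "d \<bullet> u = 0"
  proof -
    have "(A\<^sup>T *\<^sub>v d) \<bullet> w = d \<bullet> (A *\<^sub>v w)" by (rule transpose_vec_mult_scalar[OF A_carrier w d])
    thus ?thesis unfolding Atd u_def using w by simp
  qed
  have "d \<bullet> d = d \<bullet> u - d \<bullet> ((M * X) *\<^sub>v u)" unfolding d_def
    by (rule scalar_prod_minus_distrib[OF _ u MXu], insert d, simp add: d_def)
  hence "d \<bullet> d = 0" using d1 d2 by simp
  hence d0: "d = 0\<^sub>v N" by (rule scalar_prod_self_eq_zeroD[OF d])
  have "(M * X * A) *\<^sub>v w = (M * X) *\<^sub>v u" unfolding u_def by (rule assoc_mult_mat_vec[OF MX A_carrier w])
  also have "\<dots> = u"
  proof (rule eq_vecI)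
    fix i assume "i < dim_vec u" hence i: "i < N" using u by simp
    have "d $ i = u $ i - ((M * X) *\<^sub>v u) $ i" unfolding d_def using i MXu by simp
    thus "((M * X) *\<^sub>v u) $ i = u $ i" using d0 i by simp
  qed (insert u MXu, auto)
  finally show "(M * X * A) *\<^sub>v w = A *\<^sub>v w" unfolding u_def .
qed

lemma T_mult_vec: "y \<in> carrier_vec N \<Longrightarrow> T *\<^sub>v y = y - X *\<^sub>v (A *\<^sub>v y)"
  using X_carrier A_carrier by (simp add: minus_mult_distrib_mat_vec[of _ N N] assoc_mult_mat_vec[of _ N N _ N])

lemma Q_idempotent: "Q * Q = Q"
  using assoc_mult_mat[OF Q_carrier X_carrier M_carrier, symmetric] XMX by simp

lemma Q_mult_TQ: "Q * (T * Q) = T * Q"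
proof (rule mat_eq_by_mult_vec[of _ N N])
  show "Q * (T * Q) \<in> carrier_mat N N" "T * Q \<in> carrier_mat N N" using Q_carrier T_carrier by auto
  fix v :: "real vec" assume v: "v \<in> carrier_vec N"
  define y where "y = Q *\<^sub>v v"
  have y: "y \<in> carrier_vec N" unfolding y_def using Q_carrier v by auto
  have Ay: "A *\<^sub>v y \<in> carrier_vec N" using A_carrier y by auto
  have XAy: "X *\<^sub>v (A *\<^sub>v y) \<in> carrier_vec N" using X_carrier Ay by auto
  have Qy: "Q *\<^sub>v y = y" unfolding y_def using assoc_mult_mat_vec[OF Q_carrier Q_carrier v, symmetric] Q_idempotent by simp
  have QX: "Q *\<^sub>v (X *\<^sub>v (A *\<^sub>v y)) = X *\<^sub>v (A *\<^sub>v y)"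
    using assoc_mult_mat_vec[OF Q_carrier X_carrier Ay, symmetric] XMX by simp
  have TQv: "(T * Q) *\<^sub>v v = T *\<^sub>v y" unfolding y_def by (rule assoc_mult_mat_vec[OF T_carrier Q_carrier v])
  have "(Q * (T * Q)) *\<^sub>v v = Q *\<^sub>v ((T * Q) *\<^sub>v v)"
    by (rule assoc_mult_mat_vec, insert Q_carrier T_carrier v, auto)
  also have "\<dots> = Q *\<^sub>v y - Q *\<^sub>v (X *\<^sub>v (A *\<^sub>v y))"
    unfolding TQv T_mult_vec[OF y] by (rule mult_minus_distrib_mat_vec[OF Q_carrier y XAy])
  also have "\<dots> = (T * Q) *\<^sub>v v" unfolding TQv T_mult_vec[OF y] Qy QX ..
  finally show "(Q * (T * Q)) *\<^sub>v v = (T * Q) *\<^sub>v v" .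
qed

text \<open>An eigenvector of T Q for a nonzero eigenvalue l is fixed by Q, and then the identity
  M X A = A turns T z = l z into the generalized eigenproblem A z = (1 - l) M z.\<close>
lemma TQ_eigenvector:
  assumes z: "z \<in> carrier_vec N" and l0: "l \<noteq> 0" and ev: "cmat (T * Q) *\<^sub>v z = l \<cdot>\<^sub>v z"
  shows "cmat Q *\<^sub>v z = z" and "cmat A *\<^sub>v z = (1 - l) \<cdot>\<^sub>v (cmat M *\<^sub>v z)"
proof -
  have cQ: "cmat Q \<in> carrier_mat N N" and cT: "cmat T \<in> carrier_mat N N" and cX: "cmat X \<in> carrier_mat N N"
    and cA: "cmat A \<in> carrier_mat N N" and cM: "cmat M \<in> carrier_mat N N" and cTQ: "cmat (T * Q) \<in> carrier_mat N N"
    using Q_carrier T_carrier X_carrier A_carrier M_carrier by auto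
  have TQ: "cmat (T * Q) = cmat T * cmat Q" by (rule of_real_hom.mat_hom_mult[OF T_carrier Q_carrier])
  have QTQ: "cmat (Q * (T * Q)) = cmat Q * cmat (T * Q)"
    by (rule of_real_hom.mat_hom_mult[of _ N N _ N], insert T_carrier Q_carrier, auto)
  have Qz: "cmat Q *\<^sub>v z \<in> carrier_vec N" using cQ z by auto
  have "l \<cdot>\<^sub>v (cmat Q *\<^sub>v z) = cmat Q *\<^sub>v (cmat (T * Q) *\<^sub>v z)" unfolding ev using cQ z by (simp add: mult_mat_vec)
  also have "\<dots> = cmat (T * Q) *\<^sub>v z"
    unfolding assoc_mult_mat_vec[OF cQ cTQ z, symmetric] QTQ[symmetric] Q_mult_TQ ..
  finally have Qzz: "cmat Q *\<^sub>v z = z" unfolding ev by (rule smult_vec_cancel_left[OF l0 Qz z])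
  thus "cmat Q *\<^sub>v z = z" .
  have "cmat T *\<^sub>v z = cmat T *\<^sub>v (cmat Q *\<^sub>v z)" unfolding Qzz ..
  also have "\<dots> = cmat (T * Q) *\<^sub>v z" unfolding TQ by (rule assoc_mult_mat_vec[symmetric, OF cT cQ z])
  finally have Tz: "cmat T *\<^sub>v z = l \<cdot>\<^sub>v z" unfolding ev .
  have cTe: "cmat T = 1\<^sub>m N - cmat X * cmat A"
  proof -
    have "cmat T = cmat (1\<^sub>m N) - cmat (X * A)" using X_carrier A_carrier by (intro eq_matI) auto
    thus ?thesis unfolding of_real_hom.mat_hom_one of_real_hom.mat_hom_mult[OF X_carrier A_carrier] .
  qed
  define w where "w = cmat X *\<^sub>v (cmat A *\<^sub>v z)"
  have w: "w \<in> carrier_vec N" unfolding w_def using cX cA z by auto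
  have "cmat T *\<^sub>v z = 1\<^sub>m N *\<^sub>v z - (cmat X * cmat A) *\<^sub>v z" unfolding cTe
    by (rule minus_mult_distrib_mat_vec, insert cX cA z, auto)
  also have "(cmat X * cmat A) *\<^sub>v z = w" unfolding w_def by (rule assoc_mult_mat_vec[OF cX cA z])
  finally have zw: "z - w = l \<cdot>\<^sub>v z" using Tz z by simp
  have ww: "w = (1 - l) \<cdot>\<^sub>v z"
  proof (rule eq_vecI)
    fix i assume "i < dim_vec ((1 - l) \<cdot>\<^sub>v z)" hence i: "i < N" using z by simp
    have "(z - w) $ i = (l \<cdot>\<^sub>v z) $ i" by (simp only: zw)
    hence "z $ i - w $ i = l * z $ i" using i z w by simp
    thus "w $ i = ((1 - l) \<cdot>\<^sub>v z) $ i" using i z by (simp add: algebra_simps)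
  qed (insert w z, auto)
  have "cmat A *\<^sub>v z = cmat (M * X * A) *\<^sub>v z" unfolding MX_mult_A ..
  also have "cmat (M * X * A) = cmat M * cmat X * cmat A"
    unfolding of_real_hom.mat_hom_mult[OF mult_carrier_mat[OF M_carrier X_carrier] A_carrier] of_real_hom.mat_hom_mult[OF M_carrier X_carrier] ..
  also have "(cmat M * cmat X * cmat A) *\<^sub>v z = cmat M *\<^sub>v w" unfolding w_def
    using cM cX cA z by (simp add: assoc_mult_mat_vec[of _ N N _ N])
  also have "\<dots> = (1 - l) \<cdot>\<^sub>v (cmat M *\<^sub>v z)" unfolding ww using cM z by (simp add: mult_mat_vec)
  finally show "cmat A *\<^sub>v z = (1 - l) \<cdot>\<^sub>v (cmat M *\<^sub>v z)" .
qed

lemma eigen_relation_blocks: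
  assumes p: "p \<in> carrier_vec n" and q: "q \<in> carrier_vec n" and r: "r \<in> carrier_vec m" and s: "s \<in> carrier_vec m"
    and Ax: "A *\<^sub>v (p @\<^sub>v r) = \<alpha> \<cdot>\<^sub>v (M *\<^sub>v (p @\<^sub>v r)) - \<beta> \<cdot>\<^sub>v (M *\<^sub>v (q @\<^sub>v s))"
    and Ay: "A *\<^sub>v (q @\<^sub>v s) = \<beta> \<cdot>\<^sub>v (M *\<^sub>v (p @\<^sub>v r)) + \<alpha> \<cdot>\<^sub>v (M *\<^sub>v (q @\<^sub>v s))"
  shows "W *\<^sub>v p + B\<^sup>T *\<^sub>v r = \<alpha> \<cdot>\<^sub>v (P *\<^sub>v p + B\<^sup>T *\<^sub>v r) - \<beta> \<cdot>\<^sub>v (P *\<^sub>v q + B\<^sup>T *\<^sub>v s)"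
    and "W *\<^sub>v q + B\<^sup>T *\<^sub>v s = \<beta> \<cdot>\<^sub>v (P *\<^sub>v p + B\<^sup>T *\<^sub>v r) + \<alpha> \<cdot>\<^sub>v (P *\<^sub>v q + B\<^sup>T *\<^sub>v s)"
    and "(- B) *\<^sub>v p = \<alpha> \<cdot>\<^sub>v ((- B) *\<^sub>v p) - \<beta> \<cdot>\<^sub>v ((- B) *\<^sub>v q)"
    and "(- B) *\<^sub>v q = \<beta> \<cdot>\<^sub>v ((- B) *\<^sub>v p) + \<alpha> \<cdot>\<^sub>v ((- B) *\<^sub>v q)"
proof -
  have nB: "- B \<in> carrier_mat m n" and Bt: "B\<^sup>T \<in> carrier_mat n m" using B by simp_all
  have c: "P *\<^sub>v p + B\<^sup>T *\<^sub>v r \<in> carrier_vec n" "P *\<^sub>v q + B\<^sup>T *\<^sub>v s \<in> carrier_vec n"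
    "W *\<^sub>v p + B\<^sup>T *\<^sub>v r \<in> carrier_vec n" "W *\<^sub>v q + B\<^sup>T *\<^sub>v s \<in> carrier_vec n"
    "(- B) *\<^sub>v p \<in> carrier_vec m" "(- B) *\<^sub>v q \<in> carrier_vec m"
    using p q r s by simp_all
  have c': "\<alpha> \<cdot>\<^sub>v (P *\<^sub>v p + B\<^sup>T *\<^sub>v r) - \<beta> \<cdot>\<^sub>v (P *\<^sub>v q + B\<^sup>T *\<^sub>v s) \<in> carrier_vec n"
    "\<beta> \<cdot>\<^sub>v (P *\<^sub>v p + B\<^sup>T *\<^sub>v r) + \<alpha> \<cdot>\<^sub>v (P *\<^sub>v q + B\<^sup>T *\<^sub>v s) \<in> carrier_vec n"
    using c by simp_all
  note A_blocks = four_block_zero_mult_vec[OF W_carrier nB Bt]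
  note M_blocks = four_block_zero_mult_vec[OF P_carrier nB Bt]
  from Ax[unfolded A_blocks[OF p r] M_blocks[OF p r] M_blocks[OF q s] smult_append_vec(1)[OF c(1,2,5,6)]]
  show "W *\<^sub>v p + B\<^sup>T *\<^sub>v r = \<alpha> \<cdot>\<^sub>v (P *\<^sub>v p + B\<^sup>T *\<^sub>v r) - \<beta> \<cdot>\<^sub>v (P *\<^sub>v q + B\<^sup>T *\<^sub>v s)"
    and "(- B) *\<^sub>v p = \<alpha> \<cdot>\<^sub>v ((- B) *\<^sub>v p) - \<beta> \<cdot>\<^sub>v ((- B) *\<^sub>v q)"
    using append_vec_eq[OF c(3) c'(1)] by auto
  from Ay[unfolded A_blocks[OF q s] M_blocks[OF p r] M_blocks[OF q s] smult_append_vec(2)[OF c(1,2,5,6)]]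
  show "W *\<^sub>v q + B\<^sup>T *\<^sub>v s = \<beta> \<cdot>\<^sub>v (P *\<^sub>v p + B\<^sup>T *\<^sub>v r) + \<alpha> \<cdot>\<^sub>v (P *\<^sub>v q + B\<^sup>T *\<^sub>v s)"
    and "(- B) *\<^sub>v q = \<beta> \<cdot>\<^sub>v ((- B) *\<^sub>v p) + \<alpha> \<cdot>\<^sub>v ((- B) *\<^sub>v q)"
    using append_vec_eq[OF c(4) c'(2)] by auto
qed

text \<open>Testing the first block rows against p and q, where B p = B q = 0 removes the B^T terms,
  gives the real and imaginary parts of x^* W x = (alpha + i beta) omega x^* H x for x = p + i q.\<close>
lemma first_block_forms:
  assumes p: "p \<in> carrier_vec n" and q: "q \<in> carrier_vec n" and r: "r \<in> carrier_vec m" and s: "s \<in> carrier_vec m"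
    and Bp: "B *\<^sub>v p = 0\<^sub>v m" and Bq: "B *\<^sub>v q = 0\<^sub>v m"
    and E1: "W *\<^sub>v p + B\<^sup>T *\<^sub>v r = \<alpha> \<cdot>\<^sub>v (P *\<^sub>v p + B\<^sup>T *\<^sub>v r) - \<beta> \<cdot>\<^sub>v (P *\<^sub>v q + B\<^sup>T *\<^sub>v s)"
    and E3: "W *\<^sub>v q + B\<^sup>T *\<^sub>v s = \<beta> \<cdot>\<^sub>v (P *\<^sub>v p + B\<^sup>T *\<^sub>v r) + \<alpha> \<cdot>\<^sub>v (P *\<^sub>v q + B\<^sup>T *\<^sub>v s)"
  shows "p \<bullet> (H *\<^sub>v p) + q \<bullet> (H *\<^sub>v q) = \<alpha> * \<omega> * (p \<bullet> (H *\<^sub>v p) + q \<bullet> (H *\<^sub>v q))"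
    and "2 * (p \<bullet> (S *\<^sub>v q)) = \<beta> * \<omega> * (p \<bullet> (H *\<^sub>v p) + q \<bullet> (H *\<^sub>v q))"
proof -
  have cv: "W *\<^sub>v p \<in> carrier_vec n" "W *\<^sub>v q \<in> carrier_vec n" "P *\<^sub>v p \<in> carrier_vec n" "P *\<^sub>v q \<in> carrier_vec n"
    "B\<^sup>T *\<^sub>v r \<in> carrier_vec n" "B\<^sup>T *\<^sub>v s \<in> carrier_vec n"
    using p q r s by simp_all
  have cv': "P *\<^sub>v p + B\<^sup>T *\<^sub>v r \<in> carrier_vec n" "P *\<^sub>v q + B\<^sup>T *\<^sub>v s \<in> carrier_vec n" using cv by simp_all
  have pB: "p \<bullet> (B\<^sup>T *\<^sub>v y) = 0" and qB: "q \<bullet> (B\<^sup>T *\<^sub>v y) = 0" if "y \<in> carrier_vec m" for y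
    using orthogonal_range_transpose_B[OF p that Bp] orthogonal_range_transpose_B[OF q that Bq] by auto
  note expand = scalar_prod_add_distrib[of _ n] scalar_prod_lincomb[of _ n] cv cv' pB[OF r] pB[OF s] qB[OF r] qB[OF s]
  have R1: "p \<bullet> (W *\<^sub>v p) = \<alpha> * (p \<bullet> (P *\<^sub>v p)) - \<beta> * (p \<bullet> (P *\<^sub>v q))"
    using arg_cong[OF E1, of "\<lambda>v. p \<bullet> v"] p by (simp add: expand)
  have R2: "q \<bullet> (W *\<^sub>v q) = \<beta> * (q \<bullet> (P *\<^sub>v p)) + \<alpha> * (q \<bullet> (P *\<^sub>v q))"
    using arg_cong[OF E3, of "\<lambda>v. q \<bullet> v"] q by (simp add: expand)
  have R3: "q \<bullet> (W *\<^sub>v p) = \<alpha> * (q \<bullet> (P *\<^sub>v p)) - \<beta> * (q \<bullet> (P *\<^sub>v q))"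
    using arg_cong[OF E1, of "\<lambda>v. q \<bullet> v"] q by (simp add: expand)
  have R4: "p \<bullet> (W *\<^sub>v q) = \<beta> * (p \<bullet> (P *\<^sub>v p)) + \<alpha> * (p \<bullet> (P *\<^sub>v q))"
    using arg_cong[OF E3, of "\<lambda>v. p \<bullet> v"] p by (simp add: expand)
  define a1 a2 c where "a1 = p \<bullet> (H *\<^sub>v p)" and "a2 = q \<bullet> (H *\<^sub>v q)" and "c = q \<bullet> (P *\<^sub>v p)"
  note forms = quadratic_form_P[OF p] quadratic_form_P[OF q] bilinear_form_P[OF p q]
    a1_def[symmetric] a2_def[symmetric] c_def[symmetric]
  have "a1 = \<alpha> * (\<omega> * a1) - \<beta> * c" using R1 quadratic_form_H[OF p] unfolding forms by linarith
  moreover have "a2 = \<beta> * c + \<alpha> * (\<omega> * a2)" using R2 quadratic_form_H[OF q] unfolding forms by linarith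
  moreover have "q \<bullet> (W *\<^sub>v p) = \<alpha> * c - \<beta> * (\<omega> * a2)" using R3 unfolding forms .
  moreover have "p \<bullet> (W *\<^sub>v q) = \<beta> * (\<omega> * a1) + \<alpha> * c" using R4 unfolding forms .
  moreover have "\<alpha> * \<omega> * (a1 + a2) = \<alpha> * (\<omega> * a1) + \<alpha> * (\<omega> * a2)"
    "\<beta> * \<omega> * (a1 + a2) = \<beta> * (\<omega> * a1) + \<beta> * (\<omega> * a2)"
    by (simp_all add: algebra_simps)
  ultimately show "p \<bullet> (H *\<^sub>v p) + q \<bullet> (H *\<^sub>v q) = \<alpha> * \<omega> * (p \<bullet> (H *\<^sub>v p) + q \<bullet> (H *\<^sub>v q))"
    and "2 * (p \<bullet> (S *\<^sub>v q)) = \<beta> * \<omega> * (p \<bullet> (H *\<^sub>v p) + q \<bullet> (H *\<^sub>v q))"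
    unfolding bilinear_form_S[OF p q] a1_def[symmetric] a2_def[symmetric] by linarith+
qed

lemma H_quadratic_form_nonneg: "x \<in> carrier_vec n \<Longrightarrow> x \<bullet> (H *\<^sub>v x) \<ge> 0"
  using H_pos_def H_carrier unfolding pos_def_mat_def
  by (cases "x = 0\<^sub>v n") (auto simp: mult_mat_vec_zero intro: less_imp_le)

lemma first_blocks_modulus_less_1:
  assumes \<omega>_bound: "\<omega> > 1/2 * (1 + (spectral_radius (cmat K))^2)"
    and p: "p \<in> carrier_vec n" and q: "q \<in> carrier_vec n" and r: "r \<in> carrier_vec m" and s: "s \<in> carrier_vec m"
    and Bp: "B *\<^sub>v p = 0\<^sub>v m" and Bq: "B *\<^sub>v q = 0\<^sub>v m"
    and E1: "W *\<^sub>v p + B\<^sup>T *\<^sub>v r = \<alpha> \<cdot>\<^sub>v (P *\<^sub>v p + B\<^sup>T *\<^sub>v r) - \<beta> \<cdot>\<^sub>v (P *\<^sub>v q + B\<^sup>T *\<^sub>v s)"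
    and E3: "W *\<^sub>v q + B\<^sup>T *\<^sub>v s = \<beta> \<cdot>\<^sub>v (P *\<^sub>v p + B\<^sup>T *\<^sub>v r) + \<alpha> \<cdot>\<^sub>v (P *\<^sub>v q + B\<^sup>T *\<^sub>v s)"
    and pq: "p \<noteq> 0\<^sub>v n \<or> q \<noteq> 0\<^sub>v n"
  shows "(1 - \<alpha>)^2 + \<beta>^2 < 1"
proof -
  note forms = first_block_forms[OF p q r s Bp Bq E1 E3]
  define a where "a = p \<bullet> (H *\<^sub>v p) + q \<bullet> (H *\<^sub>v q)"
  have "p \<bullet> (H *\<^sub>v p) > 0 \<or> q \<bullet> (H *\<^sub>v q) > 0"
    using pq H_pos_def p q unfolding pos_def_mat_def by auto
  hence a0: "a > 0" unfolding a_def using H_quadratic_form_nonneg[OF p] H_quadratic_form_nonneg[OF q]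
    by linarith
  have "\<alpha> * \<omega> = 1" using forms(1) a0 unfolding a_def[symmetric] by simp
  moreover have "(\<beta> * \<omega>)^2 \<le> (spectral_radius (cmat K))^2"
  proof -
    have "(\<beta> * \<omega>)^2 * a^2 \<le> (spectral_radius (cmat K))^2 * a^2"
      using skew_form_bound[OF p q] unfolding forms(2) a_def[symmetric] by (simp add: power_mult_distrib)
    thus ?thesis using a0 by simp
  qed
  moreover have "1 + (spectral_radius (cmat K))^2 < 2 * \<omega>" using \<omega>_bound by simp
  ultimately show ?thesis by (rule modulus_shift_less_1[OF _ _ _ \<omega>0])
qed

lemma M_mult_zero_first_block:
  assumes t: "t \<in> carrier_vec m"
  shows "M *\<^sub>v (0\<^sub>v n @\<^sub>v t) = (B\<^sup>T *\<^sub>v t) @\<^sub>v 0\<^sub>v m"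
  using four_block_zero_mult_vec[of P n "- B" m "B\<^sup>T" "0\<^sub>v n" t] P_carrier B t mult_mat_vec_zero[OF P_carrier]
  by (simp add: mult_mat_vec_zero)

lemma TQ_eigenvalue_norm_less_1:
  assumes \<omega>_bound: "\<omega> > 1/2 * (1 + (spectral_radius (cmat K))^2)"
    and z: "z \<in> carrier_vec N" and z0: "z \<noteq> 0\<^sub>v N" and ev: "cmat (T * Q) *\<^sub>v z = l \<cdot>\<^sub>v z"
  shows "norm l < 1"
proof (cases "l = 0")
  case False
  define \<alpha> \<beta> where "\<alpha> = Re (1 - l)" and "\<beta> = Im (1 - l)"
  have ab: "\<alpha> \<noteq> 1 \<or> \<beta> \<noteq> 0" using False unfolding \<alpha>_def \<beta>_def by (auto simp: complex_eq_iff)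
  define zr zi where "zr = map_vec Re z" and "zi = map_vec Im z"
  define p q r s where "p = vec_first zr n" and "q = vec_first zi n"
    and "r = vec_last zr m" and "s = vec_last zi m"
  have zr: "zr \<in> carrier_vec N" and zi: "zi \<in> carrier_vec N" unfolding zr_def zi_def using z by auto
  have vecs: "p \<in> carrier_vec n" "q \<in> carrier_vec n" "r \<in> carrier_vec m" "s \<in> carrier_vec m"
    unfolding p_def q_def r_def s_def by auto
  have zrs: "zr = p @\<^sub>v r" and zis: "zi = q @\<^sub>v s" unfolding p_def q_def r_def s_def using zr zi by auto
  note Re_Im = Re_Im_of_mult_mat_vec_eq_smult[OF A_carrier M_carrier z TQ_eigenvector(2)[OF z False ev],
      folded zr_def zi_def \<alpha>_def \<beta>_def, unfolded zrs zis]
  note E = eigen_relation_blocks[OF vecs Re_Im]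
  have Bv: "B *\<^sub>v p \<in> carrier_vec m" "B *\<^sub>v q \<in> carrier_vec m" using vecs by simp_all
  have nBv: "(- B) *\<^sub>v p \<in> carrier_vec m" "(- B) *\<^sub>v q \<in> carrier_vec m" using vecs by simp_all
  from rotation_fixed_vec_zero[OF nBv E(3,4) ab] B vecs
  have "- (B *\<^sub>v p) = 0\<^sub>v m" "- (B *\<^sub>v q) = 0\<^sub>v m" by auto
  hence Bpq: "B *\<^sub>v p = 0\<^sub>v m" "B *\<^sub>v q = 0\<^sub>v m"
    using uminus_zero_vec_eq[OF Bv(1)] uminus_zero_vec_eq[OF Bv(2)] by auto
  have "p \<noteq> 0\<^sub>v n \<or> q \<noteq> 0\<^sub>v n"
  proof (rule ccontr)
    assume "\<not> ?thesis"
    hence p0: "p = 0\<^sub>v n" and q0: "q = 0\<^sub>v n" by auto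
    have Bt: "B\<^sup>T *\<^sub>v r \<in> carrier_vec n" "B\<^sup>T *\<^sub>v s \<in> carrier_vec n" using vecs by simp_all
    from E(1,2)[unfolded p0 q0 mult_mat_vec_zero[OF W_carrier] mult_mat_vec_zero[OF P_carrier]] Bt
    have "B\<^sup>T *\<^sub>v r = \<alpha> \<cdot>\<^sub>v (B\<^sup>T *\<^sub>v r) - \<beta> \<cdot>\<^sub>v (B\<^sup>T *\<^sub>v s)"
      "B\<^sup>T *\<^sub>v s = \<beta> \<cdot>\<^sub>v (B\<^sup>T *\<^sub>v r) + \<alpha> \<cdot>\<^sub>v (B\<^sup>T *\<^sub>v s)" by simp_all
    from rotation_fixed_vec_zero[OF Bt this ab] have Br: "B\<^sup>T *\<^sub>v r = 0\<^sub>v n" "B\<^sup>T *\<^sub>v s = 0\<^sub>v n" by auto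
    have Mz: "M *\<^sub>v zr = 0\<^sub>v N" "M *\<^sub>v zi = 0\<^sub>v N"
      unfolding zrs zis p0 q0 M_mult_zero_first_block[OF vecs(3)] M_mult_zero_first_block[OF vecs(4)] Br
      by (simp_all add: zero_append_vec)
    note Qz = TQ_eigenvector(1)[OF z False ev]
    have "Q *\<^sub>v zr = zr" "Q *\<^sub>v zi = zi"
      using arg_cong[OF Qz, of "map_vec Re"] arg_cong[OF Qz, of "map_vec Im"]
      unfolding map_vec_Re_Im_mult_mat_vec[OF Q_carrier z] zr_def zi_def by auto
    hence "zr = 0\<^sub>v N" "zi = 0\<^sub>v N"
      using Mz assoc_mult_mat_vec[OF X_carrier M_carrier zr] assoc_mult_mat_vec[OF X_carrier M_carrier zi] mult_mat_vec_zero[OF X_carrier] by auto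
    with complex_vec_eq_zeroI[OF z] z0 show False unfolding zr_def zi_def by blast
  qed
  from first_blocks_modulus_less_1[OF \<omega>_bound vecs Bpq E(1,2) this]
  have "(1 - \<alpha>)^2 + \<beta>^2 < 1" .
  moreover have "Re l = 1 - \<alpha>" "Im l = - \<beta>" unfolding \<alpha>_def \<beta>_def by auto
  ultimately show ?thesis unfolding cmod_def by simp
qed simp

lemma spectral_radius_TQ_less_1:
  assumes \<omega>_bound: "\<omega> > 1/2 * (1 + (spectral_radius (cmat K))^2)"
  shows "spectral_radius (cmat (T * Q)) < 1"
proof -
  have C: "cmat (T * Q) \<in> carrier_mat N N" using T_carrier Q_carrier by auto
  from spectral_radius_mem_max(1)[OF C] n0 obtain e where e: "e \<in> spectrum (cmat (T * Q))"
    and eq: "spectral_radius (cmat (T * Q)) = norm e" by auto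
  from e obtain z where "eigenvector (cmat (T * Q)) z e" unfolding spectrum_def eigenvalue_def by auto
  hence z: "z \<in> carrier_vec N" "z \<noteq> 0\<^sub>v N" and ev: "cmat (T * Q) *\<^sub>v z = e \<cdot>\<^sub>v z"
    unfolding eigenvector_def using C by auto
  show ?thesis unfolding eq by (rule TQ_eigenvalue_norm_less_1[OF \<omega>_bound z ev])
qed

text \<open>Write the initial error as x0 - y = d + Q (x0 - y). The part d lies in the kernel of M,
  hence of A, and is never changed; the part Q (x0 - y) stays in the range of Q and is multiplied by
  T at every step, that is by T Q.\<close>
lemma iterate_decomposition:
  assumes x0: "x0 \<in> carrier_vec N" and y: "y \<in> carrier_vec N" and Ay: "A *\<^sub>v y = b"
  defines "e \<equiv> x0 - y"
  shows "iterate A M b x0 k = y + (e - Q *\<^sub>v e) + (T * Q) ^\<^sub>m k *\<^sub>v (Q *\<^sub>v e)"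
proof -
  have e: "e \<in> carrier_vec N" unfolding e_def using x0 y by auto
  have Qe: "Q *\<^sub>v e \<in> carrier_vec N" using Q_carrier e by auto
  define d where "d = e - Q *\<^sub>v e"
  have d: "d \<in> carrier_vec N" unfolding d_def using e Qe by auto
  have C: "T * Q \<in> carrier_mat N N" using T_carrier Q_carrier by auto
  define f where "f k = (T * Q) ^\<^sub>m k *\<^sub>v (Q *\<^sub>v e)" for k
  have fc: "f k \<in> carrier_vec N" for k unfolding f_def by (rule mult_mat_vec_carrier[OF pow_carrier_mat[OF C] Qe])
  have fS: "f (Suc k) = (T * Q) *\<^sub>v f k" for k unfolding f_def by (rule pow_mat_Suc_mult_vec[OF C Qe])
  have Qf: "Q *\<^sub>v f k = f k" for k
  proof (cases k)
    case 0 thus ?thesis unfolding f_def using assoc_mult_mat_vec[OF Q_carrier Q_carrier e, symmetric] Q_idempotent T_carrier Q_carrier e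
      by simp
  next
    case (Suc j)
    have "Q *\<^sub>v f k = (Q * (T * Q)) *\<^sub>v f j" unfolding Suc fS
      by (rule assoc_mult_mat_vec[symmetric, OF Q_carrier C fc])
    thus ?thesis unfolding Q_mult_TQ Suc fS .
  qed
  have fT: "f (Suc k) = f k - X *\<^sub>v (A *\<^sub>v f k)" for k
    unfolding fS assoc_mult_mat_vec[OF T_carrier Q_carrier fc] Qf T_mult_vec[OF fc] ..
  have Ad: "A *\<^sub>v d = 0\<^sub>v N"
  proof (rule kernel_M_subset_kernel_A[OF d])
    have MQ: "M * Q = M" using assoc_mult_mat[OF M_carrier X_carrier M_carrier, symmetric] MXM by simp
    show "M *\<^sub>v d = 0\<^sub>v N" unfolding d_def
      using M_carrier e Qe assoc_mult_mat_vec[OF M_carrier Q_carrier e, symmetric] MQ by (simp add: mult_minus_distrib_mat_vec)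
  qed
  have "iterate A M b x0 k = y + d + f k"
  proof (induct k)
    case 0
    have "f 0 = Q *\<^sub>v e" unfolding f_def using Qe T_carrier Q_carrier by simp
    thus ?case unfolding d_def e_def using x0 y Qe[unfolded e_def] by (intro eq_vecI) auto
  next
    case (Suc k)
    define v where "v = y + d + f k"
    have Afk: "A *\<^sub>v f k \<in> carrier_vec N" using A_carrier fc by auto
    have "A *\<^sub>v v = A *\<^sub>v y + A *\<^sub>v f k" unfolding v_def using A_carrier y d fc Ad
      by (simp add: mult_add_distrib_mat_vec)
    hence "b - A *\<^sub>v v = - (A *\<^sub>v f k)" unfolding Ay[symmetric] using A_carrier y fc by (intro eq_vecI) auto
    hence "iterate A M b x0 (Suc k) = v + X *\<^sub>v (- (A *\<^sub>v f k))" using Suc.hyps unfolding v_def by simp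
    also have "\<dots> = y + d + f (Suc k)" unfolding fT v_def using y d fc X_carrier Afk by (intro eq_vecI) auto
    finally show ?case .
  qed
  thus ?thesis unfolding d_def f_def .
qed

lemma iteration_convergent:
  assumes \<omega>_bound: "\<omega> > 1/2 * (1 + (spectral_radius (cmat K))^2)"
    and b_range: "\<exists>y \<in> carrier_vec N. A *\<^sub>v y = b"
  shows "iteration_convergent N A M b"
  unfolding iteration_convergent_def
proof (intro ballI)
  fix x0 :: "real vec" assume x0: "x0 \<in> carrier_vec N"
  from b_range obtain y where y: "y \<in> carrier_vec N" and Ay: "A *\<^sub>v y = b" by auto
  define e where "e = x0 - y"
  have e: "e \<in> carrier_vec N" unfolding e_def using x0 y by auto
  have TQ: "T * Q \<in> carrier_mat N N" and Qe: "Q *\<^sub>v e \<in> carrier_vec N" using T_carrier Q_carrier e by auto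
  show "\<exists>L\<in>carrier_vec N. \<forall>i<N. (\<lambda>k. iterate A M b x0 k $ i) \<longlonglongrightarrow> L $ i"
  proof (intro bexI allI impI)
    show L: "y + (e - Q *\<^sub>v e) \<in> carrier_vec N" using y e Qe by auto
    fix i assume i: "i < N"
    have "(\<lambda>k. ((T * Q) ^\<^sub>m k *\<^sub>v (Q *\<^sub>v e)) $ i) \<longlonglongrightarrow> 0"
      by (rule pow_mat_mult_vec_tendsto_zero[OF TQ spectral_radius_TQ_less_1[OF \<omega>_bound] Qe i])
    hence "(\<lambda>k. (y + (e - Q *\<^sub>v e)) $ i + ((T * Q) ^\<^sub>m k *\<^sub>v (Q *\<^sub>v e)) $ i) \<longlonglongrightarrow> (y + (e - Q *\<^sub>v e)) $ i + 0"
      by (rule tendsto_add[OF tendsto_const])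
    moreover have "iterate A M b x0 k $ i = (y + (e - Q *\<^sub>v e)) $ i + ((T * Q) ^\<^sub>m k *\<^sub>v (Q *\<^sub>v e)) $ i" for k
      unfolding iterate_decomposition[OF x0 y Ay] e_def[symmetric] using L TQ Qe i by simp
    ultimately show "(\<lambda>k. iterate A M b x0 k $ i) \<longlonglongrightarrow> (y + (e - Q *\<^sub>v e)) $ i" by simp
  qed
qed

end

theorem theorem2:
  fixes n m :: nat and W B :: "real mat" and b :: "real vec" and \<omega> :: real
  assumes W: "pos_def_mat n W"
    and B: "B \<in> carrier_mat m n"
    and rank: "vec_space.rank m B < m" and mn: "m \<le> n"
    and b: "b \<in> carrier_vec (n + m)"
    and b_range: "\<exists>y \<in> carrier_vec (n + m).
                    four_block_mat W B\<^sup>T (- B) (0\<^sub>m m m) *\<^sub>v y = b"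
    and \<omega>_pos: "\<omega> > 0"
    and \<omega>_bound: "\<omega> > 1/2 * (1 + (spectral_radius (map_mat complex_of_real
          (inv_mat (spd_sqrt ((1/2) \<cdot>\<^sub>m (W + W\<^sup>T))) * ((1/2) \<cdot>\<^sub>m (W - W\<^sup>T))
           * inv_mat (spd_sqrt ((1/2) \<cdot>\<^sub>m (W + W\<^sup>T))))))\<^sup>2)"
  shows "iteration_convergent (n + m) (four_block_mat W B\<^sup>T (- B) (0\<^sub>m m m))
           (four_block_mat (\<omega> \<cdot>\<^sub>m ((1/2) \<cdot>\<^sub>m (W + W\<^sup>T))) B\<^sup>T (- B) (0\<^sub>m m m)) b"
proof -
  have "n > 0" using rank mn by linarith
  then interpret saddle_point_iteration n m W B \<omega>
    by (rule saddle_point_iteration.intro[OF W B \<omega>_pos])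
  show ?thesis by (rule iteration_convergent[OF \<omega>_bound b_range])
qed

end
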